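(* Let $F$ be an algebraically closed field with $\operatorname{char}F>3$, $R=F[[x,y]]$, and let $f\in R^2$ be an isolated complete intersection singularity contact equivalent to $$(x^3+a(y)xy^r+b(y)y^s,\ x^2y+c(y)y^t),$$ where $r\ge 3$, $s\ge 4$, $t\ge 4$ and $a(y),b(y),c(y)\in F[[y]]$ are units. If $s=4$, then $f$ is contact equivalent to $(x^3+y^4,\,x^2y+\lambda y^4)$ for some $\lambda\in\{0,1\}$.
   Context: $\mathfrak m=\langle x,y\rangle$. ICIS: $f_1,f_2\in\mathfrak m$ a regular sequence with $\mathfrak m^k\subset\langle f_1,f_2\rangle+I_2(J(f))$ for some $k$. Contact equivalence: $g=U\cdot\phi(f)$ with $U\in GL(2,R)$, $\phi\in\operatorname{Aut}(R)$. *)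

theory Defs
  imports "HOL-Computational_Algebra.Computational_Algebra"
begin

text \<open>R = F[[x,y]] is modelled as F[[y]][[x]], i.e. the type 'a fps fps:
  the outer variable is x, the inner variable (coefficients) is y.\<close>

type_synonym 'a bips = "'a fps fps"

definition vx :: "'a::comm_ring_1 bips" where "vx = fps_X"
definition vy :: "'a::comm_ring_1 bips" where "vy = fps_const fps_X"

definition of_y :: "'a::comm_ring_1 fps \<Rightarrow> 'a bips" where "of_y a = fps_const a"
definition cst :: "'a::comm_ring_1 \<Rightarrow> 'a bips" where "cst c = fps_const (fps_const c)"

definition dx :: "'a::comm_ring_1 bips \<Rightarrow> 'a bips" where "dx f = fps_deriv f"
definition dy :: "'a::comm_ring_1 bips \<Rightarrow> 'a bips" where
  "dy f = Abs_fps (\<lambda>n. fps_deriv (f $ n))"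

definition in_max :: "'a::comm_ring_1 bips \<Rightarrow> bool" where
  "in_max h \<longleftrightarrow> h $ 0 $ 0 = 0"

definition ideal_gen :: "'a::comm_ring_1 bips set \<Rightarrow> 'a bips set" where
  "ideal_gen S = {(\<Sum>i<(n::nat). c i * s i) | n c s. \<forall>i<n. s i \<in> S}"

definition regular_seq :: "'a::comm_ring_1 bips \<Rightarrow> 'a bips \<Rightarrow> bool" where
  "regular_seq f1 f2 \<longleftrightarrow>
     ideal_gen {f1, f2} \<noteq> UNIV \<and>
     (\<forall>h. h * f1 = 0 \<longrightarrow> h = 0) \<and>
     (\<forall>h. h * f2 \<in> ideal_gen {f1} \<longrightarrow> h \<in> ideal_gen {f1})"

definition jac_det :: "'a::comm_ring_1 bips \<Rightarrow> 'a bips \<Rightarrow> 'a bips" where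
  "jac_det f1 f2 = dx f1 * dy f2 - dy f1 * dx f2"

text \<open>ICIS: f1,f2 in m, regular sequence, and m^k \<subseteq> <f1,f2> + I_2(J(f)) for some k
  (m^k is generated by the monomials x^i y^(k-i)).\<close>
definition ICIS :: "'a::comm_ring_1 bips \<times> 'a bips \<Rightarrow> bool" where
  "ICIS f \<longleftrightarrow> in_max (fst f) \<and> in_max (snd f) \<and> regular_seq (fst f) (snd f) \<and>
     (\<exists>k. \<forall>i\<le>k. vx ^ i * vy ^ (k - i) \<in> ideal_gen {fst f, snd f, jac_det (fst f) (snd f)})"

definition is_aut :: "('a::comm_ring_1 bips \<Rightarrow> 'a bips) \<Rightarrow> bool" where
  "is_aut \<phi> \<longleftrightarrow> bij \<phi> \<and> (\<forall>a b. \<phi> (a + b) = \<phi> a + \<phi> b) \<and>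
     (\<forall>a b. \<phi> (a * b) = \<phi> a * \<phi> b) \<and> (\<forall>c. \<phi> (cst c) = cst c)"

definition contact_equiv :: "'a::comm_ring_1 bips \<times> 'a bips \<Rightarrow> 'a bips \<times> 'a bips \<Rightarrow> bool" where
  "contact_equiv f g \<longleftrightarrow>
     (\<exists>u11 u12 u21 u22 \<phi>. (\<exists>w. (u11 * u22 - u12 * u21) * w = 1) \<and> is_aut \<phi> \<and>
        fst g = u11 * \<phi> (fst f) + u12 * \<phi> (snd f) \<and>
        snd g = u21 * \<phi> (fst f) + u22 * \<phi> (snd f))"

end

theory Submission
  imports Defs
begin

text \<open>After absorbing the surplus powers of y into a and c, a rescaling of x makes b(0) = 1. The
  coordinate change x \<mapsto> P = x + d y^2 + u y^3, y \<mapsto> (1 + v P) y + e P followed by the row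
  operation g2 - e g1 brings the pair to N = (x^3 + y^4, x^2 y + K y^4) modulo m \<cdot> (N): the
  coefficients of x y^3, x y^4 and y^4 can be killed one after the other, and m^6 \<subseteq> m \<cdot> (N).
  A pair congruent to N modulo m \<cdot> (N) is U N with U congruent to the identity matrix, hence
  contact equivalent to N. Finally x \<mapsto> K^-4 x, y \<mapsto> K^-3 y turns K \<noteq> 0 into 1.\<close>

lemma vx_nth: "(vx :: 'a::comm_ring_1 bips) $ n = (if n = 1 then 1 else 0)"
  by (simp add: vx_def)

lemma vy_nth: "(vy :: 'a::comm_ring_1 bips) $ n = (if n = 0 then fps_X else 0)"
  by (simp add: vy_def)

lemma cst_nth: "(cst c :: 'a::comm_ring_1 bips) $ n = (if n = 0 then fps_const c else 0)"
  by (simp add: cst_def)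

lemma cst_add: "cst (a + b) = (cst a + cst b :: 'a::comm_ring_1 bips)"
  and cst_mult: "cst (a * b) = (cst a * cst b :: 'a::comm_ring_1 bips)"
  and cst_diff: "cst (a - b) = (cst a - cst b :: 'a::comm_ring_1 bips)"
  and cst_uminus: "cst (- a) = (- cst a :: 'a::comm_ring_1 bips)"
  and cst_power: "cst (a ^ n) = (cst a ^ n :: 'a::comm_ring_1 bips)"
  and cst_0: "cst 0 = (0 :: 'a::comm_ring_1 bips)"
  and cst_1: "cst 1 = (1 :: 'a::comm_ring_1 bips)"
  and cst_numeral: "cst (numeral k) = (numeral k :: 'a::comm_ring_1 bips)"
  by (simp_all add: cst_def fps_numeral_fps_const)

lemmas cst_simps = cst_add cst_mult cst_diff cst_uminus cst_power cst_0 cst_1 cst_numeral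

lemma of_y_add: "of_y (a + b) = (of_y a + of_y b :: 'a::comm_ring_1 bips)"
  and of_y_mult: "of_y (a * b) = (of_y a * of_y b :: 'a::comm_ring_1 bips)"
  and of_y_const: "of_y (fps_const c) = (cst c :: 'a::comm_ring_1 bips)"
  and of_y_X_power: "of_y (fps_X ^ k) = (vy ^ k :: 'a::comm_ring_1 bips)"
  by (simp_all add: of_y_def cst_def vy_def)

lemma bips_mult_nth:
  "((a::'a::comm_ring_1 bips) * b) $ n $ m = (\<Sum>i=0..n. \<Sum>j=0..m. a$i$j * b$(n-i)$(m-j))"
  by (simp add: fps_mult_nth fps_sum_nth)

lemma bips_mult_nth_0_0: "((a::'a::comm_ring_1 bips) * b) $ 0 $ 0 = a$0$0 * b$0$0"
  by (simp add: bips_mult_nth)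

lemma bips_power_nth_0_0: "((a::'a::comm_ring_1 bips) ^ n) $ 0 $ 0 = (a$0$0) ^ n"
  by (induction n) (simp_all add: bips_mult_nth_0_0)

lemma bips_invertible:
  fixes h :: "'a::field bips"
  assumes "h $ 0 $ 0 \<noteq> 0"
  shows "\<exists>w. h * w = 1"
proof -
  define z where "z = fps_right_inverse (h$0) (inverse (h$0$0))"
  have "h$0 * z = 1" unfolding z_def by (rule fps_right_inverse) (simp add: assms)
  then have "h * fps_right_inverse h z = 1" by (rule fps_right_inverse)
  then show ?thesis by blast
qed

lemma in_max_add: "in_max a \<Longrightarrow> in_max b \<Longrightarrow> in_max (a + b)"
  and in_max_diff: "in_max a \<Longrightarrow> in_max b \<Longrightarrow> in_max (a - b)"
  and in_max_mult_left: "in_max b \<Longrightarrow> in_max (a * b)"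
  and in_max_linear: "in_max (vx * a + vy * b)"
  by (simp_all add: in_max_def bips_mult_nth_0_0 vx_nth vy_nth)

section \<open>The powers of the maximal ideal\<close>

definition in_max_pow :: "nat \<Rightarrow> 'a::comm_ring_1 bips \<Rightarrow> bool" where
  "in_max_pow k h \<longleftrightarrow> (\<forall>n m. n + m < k \<longrightarrow> h $ n $ m = 0)"

lemma in_max_iff_in_max_pow_1: "in_max h \<longleftrightarrow> in_max_pow 1 h"
  by (simp add: in_max_def in_max_pow_def)

lemma in_max_pow_0 [simp]: "in_max_pow 0 h"
  and in_max_pow_zero [simp]: "in_max_pow k 0"
  by (simp_all add: in_max_pow_def)

lemma in_max_pow_mono: "in_max_pow k h \<Longrightarrow> j \<le> k \<Longrightarrow> in_max_pow j h"
  by (auto simp: in_max_pow_def)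

lemma in_max_pow_add: "in_max_pow k a \<Longrightarrow> in_max_pow k b \<Longrightarrow> in_max_pow k (a + b)"
  and in_max_pow_diff: "in_max_pow k a \<Longrightarrow> in_max_pow k b \<Longrightarrow> in_max_pow k (a - b)"
  by (auto simp: in_max_pow_def)

lemma in_max_pow_sum: "(\<And>i. i \<in> S \<Longrightarrow> in_max_pow k (f i)) \<Longrightarrow> in_max_pow k (sum f S)"
  by (induction S rule: infinite_finite_induct) (auto intro: in_max_pow_add)

lemma in_max_pow_mult: "in_max_pow i a \<Longrightarrow> in_max_pow j b \<Longrightarrow> in_max_pow (i + j) (a * b)"
  unfolding in_max_pow_def
proof (intro allI impI)
  fix n m
  assume a: "\<forall>n m. n + m < i \<longrightarrow> a $ n $ m = 0" and b: "\<forall>n m. n + m < j \<longrightarrow> b $ n $ m = 0"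
    and nm: "n + m < i + j"
  have "a$p$q * b$(n-p)$(m-q) = 0" if "p \<le> n" "q \<le> m" for p q
  proof (cases "p + q < i")
    case False
    then have "(n-p) + (m-q) < j" using nm that by linarith
    then show ?thesis using b by simp
  qed (use a in simp)
  then show "(a * b) $ n $ m = 0"
    by (simp add: bips_mult_nth)
qed

lemma in_max_pow_mult_left: "in_max_pow k b \<Longrightarrow> in_max_pow k (a * b)"
  using in_max_pow_mult[of 0 a k b] by simp

lemma in_max_pow_mult_right: "in_max_pow k a \<Longrightarrow> in_max_pow k (a * b)"
  using in_max_pow_mult[of k a 0 b] by simp

lemma in_max_pow_power: "in_max_pow i a \<Longrightarrow> in_max_pow (n * i) (a ^ n)"
  by (induction n) (simp_all add: in_max_pow_mult)

lemma in_max_pow_vx [simp]: "in_max_pow (Suc 0) (vx :: 'a::comm_ring_1 bips)"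
  and in_max_pow_vy [simp]: "in_max_pow (Suc 0) (vy :: 'a::comm_ring_1 bips)"
  by (auto simp: in_max_pow_def vx_nth vy_nth)

lemma in_max_pow_monomial:
  "k \<le> i + j \<Longrightarrow> in_max_pow k ((vx :: 'a::comm_ring_1 bips) ^ i * vy ^ j * c)"
  using in_max_pow_mult[OF in_max_pow_power[OF in_max_pow_vx, of i] in_max_pow_power[OF in_max_pow_vy, of j]]
  by (auto intro: in_max_pow_mult_right in_max_pow_mono)

lemma in_max_pow_all_imp_zero: "(\<And>k. in_max_pow k h) \<Longrightarrow> h = 0"
  by (intro fps_ext) (metis fps_zero_nth in_max_pow_def lessI)

lemma in_max_pow_Suc_decomp:
  fixes h :: "'a::comm_ring_1 bips"
  assumes "in_max_pow (Suc k) h"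
  obtains h1 h2 where "h = vx * h1 + vy * h2" "in_max_pow k h1" "in_max_pow k h2"
proof
  define h1 where "h1 = fps_shift 1 h"
  define h2 where "h2 = (fps_const (fps_shift 1 (h $ 0)) :: 'a bips)"
  have "h $ 0 $ 0 = 0" using assms by (simp add: in_max_pow_def)
  then show "h = vx * h1 + vy * h2"
    by (intro fps_ext) (auto simp: vx_def vy_def h1_def h2_def fps_eq_iff elim: nat.exhaust)
  show "in_max_pow k h1" "in_max_pow k h2"
    using assms by (auto simp: in_max_pow_def h1_def h2_def)
qed

lemma in_max_pow_induct [consumes 1, case_names add monomial]:
  fixes h :: "'a::comm_ring_1 bips"
  assumes "in_max_pow k h"
    and "\<And>a b. P a \<Longrightarrow> P b \<Longrightarrow> P (a + b)"
    and "\<And>i r. i \<le> k \<Longrightarrow> P (vx ^ i * vy ^ (k - i) * r)"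
  shows "P h"
  using assms
proof (induction k arbitrary: P h)
  case 0
  then show ?case using "0.prems"(3)[of 0 h] by simp
next
  case (Suc k)
  obtain h1 h2 where h: "h = vx * h1 + vy * h2" "in_max_pow k h1" "in_max_pow k h2"
    using in_max_pow_Suc_decomp[OF Suc.prems(1)] by blast
  have "P (vx * h1)"
  proof (rule Suc.IH[OF h(2), where P = "\<lambda>g. P (vx * g)"])
    fix a b assume "P (vx * a)" "P (vx * b)"
    then show "P (vx * (a + b))" using Suc.prems(2) by (simp add: distrib_left)
  next
    fix i r assume "i \<le> k"
    then show "P (vx * (vx ^ i * vy ^ (k - i) * r))"
      using Suc.prems(3)[of "Suc i" r] by (simp add: mult_ac)
  qed
  moreover have "P (vy * h2)"
  proof (rule Suc.IH[OF h(3), where P = "\<lambda>g. P (vy * g)"])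
    fix a b assume "P (vy * a)" "P (vy * b)"
    then show "P (vy * (a + b))" using Suc.prems(2) by (simp add: distrib_left)
  next
    fix i r assume "i \<le> k"
    then have "Suc k - i = Suc (k - i)" by simp
    then show "P (vy * (vx ^ i * vy ^ (k - i) * r))"
      using Suc.prems(3)[of i r] \<open>i \<le> k\<close> by (simp add: mult_ac)
  qed
  ultimately show ?case using Suc.prems(2) h(1) by simp
qed

section \<open>Algebra endomorphisms and substitution\<close>

definition alg_endo :: "('a::comm_ring_1 bips \<Rightarrow> 'a bips) \<Rightarrow> bool" where
  "alg_endo \<phi> \<longleftrightarrow> (\<forall>a b. \<phi> (a + b) = \<phi> a + \<phi> b) \<and> (\<forall>a b. \<phi> (a * b) = \<phi> a * \<phi> b) \<and>
     (\<forall>c. \<phi> (cst c) = cst c)"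

lemma alg_endoD:
  assumes "alg_endo \<phi>"
  shows alg_endo_add: "\<phi> (a + b) = \<phi> a + \<phi> b"
    and alg_endo_mult: "\<phi> (a * b) = \<phi> a * \<phi> b"
    and alg_endo_cst: "\<phi> (cst c) = cst c"
  using assms by (auto simp: alg_endo_def)

lemma alg_endo_0: "alg_endo \<phi> \<Longrightarrow> \<phi> 0 = 0"
  using alg_endo_add[of \<phi> 0 0] by simp

lemma alg_endo_1: "alg_endo \<phi> \<Longrightarrow> \<phi> 1 = 1"
  using alg_endo_cst[of \<phi> 1] by (simp add: cst_1)

lemma alg_endo_diff: "alg_endo \<phi> \<Longrightarrow> \<phi> (a - b) = \<phi> a - \<phi> b"
  using alg_endo_add[of \<phi> "a - b" b] by (simp add: eq_diff_eq)

lemma alg_endo_power: "alg_endo \<phi> \<Longrightarrow> \<phi> (a ^ n) = \<phi> a ^ n"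
  by (induction n) (simp_all add: alg_endo_1 alg_endo_mult)

lemma alg_endo_sum: "alg_endo \<phi> \<Longrightarrow> \<phi> (sum f S) = (\<Sum>i\<in>S. \<phi> (f i))"
  by (induction S rule: infinite_finite_induct)
     (simp_all add: alg_endo_add alg_endo_0)

lemmas alg_endo_simps = alg_endo_add alg_endo_mult alg_endo_power alg_endo_cst alg_endo_diff alg_endo_1

lemma alg_endo_id: "alg_endo id"
  and alg_endo_comp: "alg_endo \<phi> \<Longrightarrow> alg_endo \<psi> \<Longrightarrow> alg_endo (\<phi> \<circ> \<psi>)"
  by (simp_all add: alg_endo_def)

lemma alg_endo_in_max_pow:
  assumes "alg_endo \<phi>" "in_max (\<phi> vx)" "in_max (\<phi> vy)" "in_max_pow k h"
  shows "in_max_pow k (\<phi> h)"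
  using assms(4)
proof (induction k arbitrary: h)
  case (Suc k)
  then obtain h1 h2 where h: "h = vx * h1 + vy * h2" "in_max_pow k h1" "in_max_pow k h2"
    using in_max_pow_Suc_decomp by blast
  have "\<phi> h = \<phi> vx * \<phi> h1 + \<phi> vy * \<phi> h2"
    using assms(1) by (simp add: h alg_endo_add alg_endo_mult)
  then show ?case
    using in_max_pow_mult[of 1 "\<phi> vx" k] in_max_pow_mult[of 1 "\<phi> vy" k] Suc.IH[OF h(2)] Suc.IH[OF h(3)]
      assms(2,3) by (simp add: in_max_iff_in_max_pow_1 in_max_pow_add)
qed simp

lemma cst_vx_vy_monomial_nth:
  "(cst c * vx ^ i * vy ^ j :: 'a::comm_ring_1 bips) $ n $ m = (if n = i \<and> m = j then c else 0)"
proof -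
  have "(cst c * vx ^ i * vy ^ j :: 'a bips) = fps_X ^ i * fps_const (fps_const c * fps_X ^ j)"
    by (simp add: cst_def vx_def vy_def mult_ac)
  then show ?thesis
    by (simp add: fps_X_power_mult_nth)
qed

lemma in_max_pow_diff_truncation:
  "in_max_pow k (h - (\<Sum>i<k. \<Sum>j<k. cst (h$i$j) * vx ^ i * vy ^ j))"
  unfolding in_max_pow_def
proof (intro allI impI)
  fix n m assume "n + m < k"
  have "(\<Sum>i<k. \<Sum>j<k. cst (h$i$j) * vx ^ i * vy ^ j) $ n $ m =
      (\<Sum>i<k. \<Sum>j<k. if n = i \<and> m = j then h $ i $ j else 0)"
    by (simp add: fps_sum_nth cst_vx_vy_monomial_nth)
  also have "\<dots> = (\<Sum>i<k. if n = i then h $ i $ m else 0)"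
  proof (intro sum.cong refl)
    fix i show "(\<Sum>j<k. if n = i \<and> m = j then h $ i $ j else 0) = (if n = i then h $ i $ m else 0)"
      using \<open>n + m < k\<close> by (cases "n = i") simp_all
  qed
  finally show "(h - (\<Sum>i<k. \<Sum>j<k. cst (h$i$j) * vx ^ i * vy ^ j)) $ n $ m = 0"
    using \<open>n + m < k\<close> by simp
qed

text \<open>Endomorphisms preserve the powers of m, and modulo m^k every series is a polynomial.\<close>

lemma alg_endo_eqI:
  assumes "alg_endo \<phi>" "alg_endo \<chi>" "\<phi> vx = \<chi> vx" "\<phi> vy = \<chi> vy" "in_max (\<phi> vx)" "in_max (\<phi> vy)"
  shows "\<phi> h = \<chi> h"
proof -
  have "in_max_pow k (\<phi> h - \<chi> h)" for k
  proof -
    define p where "p = (\<Sum>i<k. \<Sum>j<k. cst (h$i$j) * vx ^ i * vy ^ j)"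
    have "in_max_pow k (h - p)"
      unfolding p_def by (rule in_max_pow_diff_truncation)
    have "\<phi> p = \<chi> p"
      using assms(1-4) by (simp add: p_def alg_endo_sum alg_endo_mult alg_endo_power alg_endo_cst)
    then have "\<phi> h - \<chi> h = \<phi> (h - p) - \<chi> (h - p)"
      using assms(1,2) by (simp add: alg_endo_diff)
    moreover have "in_max_pow k (\<phi> (h - p))"
      using alg_endo_in_max_pow[OF assms(1,5,6) \<open>in_max_pow k (h - p)\<close>] .
    moreover have "in_max_pow k (\<chi> (h - p))"
      using alg_endo_in_max_pow[OF assms(2) _ _ \<open>in_max_pow k (h - p)\<close>] assms(3-6) by simp
    ultimately show ?thesis by (simp add: in_max_pow_diff)
  qed
  then have "\<phi> h - \<chi> h = 0" by (rule in_max_pow_all_imp_zero)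
  then show ?thesis by simp
qed

definition ring_hom_bips :: "('b::comm_ring_1 \<Rightarrow> 'a::comm_ring_1 bips) \<Rightarrow> bool" where
  "ring_hom_bips \<iota> \<longleftrightarrow>
     (\<forall>a b. \<iota> (a + b) = \<iota> a + \<iota> b) \<and> (\<forall>a b. \<iota> (a * b) = \<iota> a * \<iota> b) \<and> \<iota> 1 = 1"

lemma ring_hom_bipsD:
  assumes "ring_hom_bips \<iota>"
  shows ring_hom_bips_add: "\<iota> (a + b) = \<iota> a + \<iota> b"
    and ring_hom_bips_mult: "\<iota> (a * b) = \<iota> a * \<iota> b"
    and ring_hom_bips_1: "\<iota> 1 = 1"
  using assms by (auto simp: ring_hom_bips_def)

lemma ring_hom_bips_0: "ring_hom_bips \<iota> \<Longrightarrow> \<iota> 0 = 0"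
  using ring_hom_bips_add[of \<iota> 0 0] by simp

lemma ring_hom_bips_cst: "ring_hom_bips (cst :: 'a \<Rightarrow> 'a::comm_ring_1 bips)"
  by (simp add: ring_hom_bips_def cst_add cst_mult cst_1)

text \<open>Evaluation of a power series at z in m, after mapping its coefficients by iota: since
  z^i lies in m^i, only the terms with i \<le> n + m contribute to the coefficient of x^n y^m.\<close>

definition eval_fps :: "('b::comm_ring_1 \<Rightarrow> 'a::comm_ring_1 bips) \<Rightarrow> 'a bips \<Rightarrow> 'b fps \<Rightarrow> 'a bips" where
  "eval_fps \<iota> z s = Abs_fps (\<lambda>n. Abs_fps (\<lambda>m. (\<Sum>i\<le>n+m. \<iota> (s$i) * z^i) $ n $ m))"

lemma eval_fps_nth: "eval_fps \<iota> z s $ n $ m = (\<Sum>i\<le>n+m. \<iota> (s$i) * z^i) $ n $ m"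
  by (simp add: eval_fps_def)

lemma eval_fps_nth_partial_sum:
  assumes "in_max z" and "n + m < M"
  shows "eval_fps \<iota> z s $ n $ m = (\<Sum>i<M. \<iota> (s$i) * z^i) $ n $ m"
proof -
  have "{..n+m} \<subseteq> {..<M}" using assms(2) by auto
  then have "(\<Sum>i<M. \<iota> (s$i) * z^i) =
      (\<Sum>i\<in>{..<M} - {..n+m}. \<iota> (s$i) * z^i) + (\<Sum>i\<le>n+m. \<iota> (s$i) * z^i)"
    by (rule sum.subset_diff) simp
  moreover have "in_max_pow (Suc (n+m)) (\<Sum>i\<in>{..<M} - {..n+m}. \<iota> (s$i) * z^i)"
  proof (rule in_max_pow_sum)
    fix i assume "i \<in> {..<M} - {..n+m}"
    then have "Suc (n+m) \<le> i" by auto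
    then show "in_max_pow (Suc (n+m)) (\<iota> (s$i) * z^i)"
      using in_max_pow_mult_left[OF in_max_pow_power[of 1 z i]] assms(1)
      by (auto simp: in_max_iff_in_max_pow_1 intro: in_max_pow_mono)
  qed
  ultimately show ?thesis by (simp add: eval_fps_nth in_max_pow_def)
qed

lemma eval_fps_add:
  assumes "ring_hom_bips \<iota>"
  shows "eval_fps \<iota> z (s + t) = eval_fps \<iota> z s + eval_fps \<iota> z t"
  by (rule fps_ext, rule fps_ext)
     (simp add: eval_fps_nth ring_hom_bips_add[OF assms] distrib_right sum.distrib fps_sum_nth)

lemma eval_fps_0:
  assumes "ring_hom_bips \<iota>"
  shows "eval_fps \<iota> z 0 = 0"
  by (rule fps_ext, rule fps_ext) (simp add: eval_fps_nth ring_hom_bips_0[OF assms] fps_sum_nth)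

lemma eval_fps_sum:
  assumes "ring_hom_bips \<iota>"
  shows "eval_fps \<iota> z (sum f S) = (\<Sum>i\<in>S. eval_fps \<iota> z (f i))"
  by (induction S rule: infinite_finite_induct)
     (simp_all add: eval_fps_0[OF assms] eval_fps_add[OF assms])

lemma eval_fps_monom:
  assumes "ring_hom_bips \<iota>" "in_max z"
  shows "eval_fps \<iota> z (fps_const c * fps_X ^ k) = \<iota> c * z ^ k"
proof (rule fps_ext, rule fps_ext)
  fix n m
  define M where "M = Suc (max (n+m) k)"
  have "\<iota> ((fps_const c * fps_X ^ k) $ i) * z^i = (if i = k then \<iota> c * z^k else 0)" for i
    by (cases "i = k") (simp_all add: ring_hom_bips_0[OF assms(1)])
  then have "(\<Sum>i<M. \<iota> ((fps_const c * fps_X ^ k) $ i) * z^i) = \<iota> c * z^k"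
    by (simp add: M_def)
  moreover have "eval_fps \<iota> z (fps_const c * fps_X ^ k) $ n $ m =
      (\<Sum>i<M. \<iota> ((fps_const c * fps_X ^ k) $ i) * z^i) $ n $ m"
    by (rule eval_fps_nth_partial_sum[OF assms(2)]) (simp add: M_def)
  ultimately show "eval_fps \<iota> z (fps_const c * fps_X ^ k) $ n $ m = (\<iota> c * z ^ k) $ n $ m"
    by simp
qed

lemma eval_fps_const:
  assumes "ring_hom_bips \<iota>" "in_max z"
  shows "eval_fps \<iota> z (fps_const c) = \<iota> c"
  using eval_fps_monom[OF assms, of c 0] by simp

lemma eval_fps_X:
  assumes "ring_hom_bips \<iota>" "in_max z"
  shows "eval_fps \<iota> z fps_X = z"
  using eval_fps_monom[OF assms, of 1 1] by (simp add: ring_hom_bips_1[OF assms(1)])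

lemma in_max_pow_eval_fps_X_power_mult:
  assumes "ring_hom_bips \<iota>"
  shows "in_max_pow M (eval_fps \<iota> z (fps_X ^ M * w))"
  unfolding in_max_pow_def
proof (intro allI impI)
  fix n m assume "n + m < M"
  then have "(\<Sum>i\<le>n+m. \<iota> ((fps_X ^ M * w) $ i) * z^i) = 0"
    by (intro sum.neutral) (auto simp: fps_X_power_mult_nth ring_hom_bips_0[OF assms])
  then show "eval_fps \<iota> z (fps_X ^ M * w) $ n $ m = 0"
    by (simp add: eval_fps_nth)
qed

lemma fps_cutoff_eq_sum: "fps_cutoff M s = (\<Sum>i<M. fps_const (s$i) * fps_X^i)"
proof (intro fps_ext)
  fix n
  have "(fps_const (s$i) * fps_X^i) $ n = (if n = i then s$i else 0)" for i
    by simp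
  then show "fps_cutoff M s $ n = (\<Sum>i<M. fps_const (s$i) * fps_X^i) $ n"
    by (simp add: fps_sum_nth)
qed

lemma eval_fps_mult_fps_cutoff:
  assumes r: "ring_hom_bips \<iota>" and z: "in_max z"
  shows "eval_fps \<iota> z (fps_cutoff M s * fps_cutoff M t) =
    eval_fps \<iota> z (fps_cutoff M s) * eval_fps \<iota> z (fps_cutoff M t)"
proof -
  have "fps_cutoff M s * fps_cutoff M t = (\<Sum>i<M. \<Sum>j<M. fps_const (s$i * t$j) * fps_X^(i+j))"
    by (simp add: fps_cutoff_eq_sum sum_product power_add mult_ac)
  then have "eval_fps \<iota> z (fps_cutoff M s * fps_cutoff M t) = (\<Sum>i<M. \<Sum>j<M. \<iota> (s$i * t$j) * z^(i+j))"
    by (simp add: eval_fps_sum[OF r] eval_fps_monom[OF r z])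
  also have "\<dots> = (\<Sum>i<M. \<iota> (s$i) * z^i) * (\<Sum>j<M. \<iota> (t$j) * z^j)"
    by (simp add: sum_product ring_hom_bips_mult[OF r] power_add mult_ac)
  also have "\<dots> = eval_fps \<iota> z (fps_cutoff M s) * eval_fps \<iota> z (fps_cutoff M t)"
    by (simp add: fps_cutoff_eq_sum eval_fps_sum[OF r] eval_fps_monom[OF r z])
  finally show ?thesis .
qed

text \<open>Split both factors into the polynomial part of degree less than M and a tail in m^M.\<close>

lemma eval_fps_mult:
  assumes r: "ring_hom_bips \<iota>" and z: "in_max z"
  shows "eval_fps \<iota> z (s * t) = eval_fps \<iota> z s * eval_fps \<iota> z t"
proof -
  let ?E = "eval_fps \<iota> z"
  have "in_max_pow M (?E s * ?E t - ?E (s * t))" for M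
  proof -
    define ps pt where "ps = fps_cutoff M s" and "pt = fps_cutoff M t"
    define s' t' where "s' = fps_shift M s" and "t' = fps_shift M t"
    have s: "s = ps + fps_X^M * s'" and t: "t = pt + fps_X^M * t'"
      unfolding ps_def pt_def s'_def t'_def by (metis add.commute fps_shift_cutoff')+
    define w where "w = s' * pt + ps * t' + fps_X^M * s' * t'"
    have "s * t = ps * pt + fps_X^M * w"
      by (simp add: s t w_def algebra_simps)
    then have "?E (s * t) = ?E ps * ?E pt + ?E (fps_X^M * w)"
      using eval_fps_mult_fps_cutoff[OF r z] by (simp add: eval_fps_add[OF r] ps_def pt_def)
    moreover have "?E s = ?E ps + ?E (fps_X^M * s')" "?E t = ?E pt + ?E (fps_X^M * t')"
      by (subst s, rule eval_fps_add[OF r], subst t, rule eval_fps_add[OF r])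
    ultimately have "?E s * ?E t - ?E (s * t) =
        ?E ps * ?E (fps_X^M * t') + ?E (fps_X^M * s') * (?E pt + ?E (fps_X^M * t')) - ?E (fps_X^M * w)"
      by (simp add: algebra_simps)
    then show ?thesis
      by (simp only:) (intro in_max_pow_diff in_max_pow_add in_max_pow_mult_left in_max_pow_mult_right
          in_max_pow_eval_fps_X_power_mult[OF r])
  qed
  then have "?E s * ?E t - ?E (s * t) = 0" by (rule in_max_pow_all_imp_zero)
  then show ?thesis by simp
qed

lemma ring_hom_bips_eval_fps:
  assumes "ring_hom_bips \<iota>" "in_max z"
  shows "ring_hom_bips (eval_fps \<iota> z)"
  using eval_fps_const[OF assms, of 1] eval_fps_add[OF assms(1)] eval_fps_mult[OF assms]
  by (simp add: ring_hom_bips_def ring_hom_bips_1[OF assms(1)])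

text \<open>The substitution x \<mapsto> P, y \<mapsto> Q: each coefficient, a series in y, is evaluated at Q,
  and the resulting series in x at P.\<close>

definition eval_y :: "'a::comm_ring_1 bips \<Rightarrow> 'a fps \<Rightarrow> 'a bips" where
  "eval_y Q = eval_fps cst Q"

definition subst_xy :: "'a::comm_ring_1 bips \<Rightarrow> 'a bips \<Rightarrow> 'a bips \<Rightarrow> 'a bips" where
  "subst_xy P Q = eval_fps (eval_y Q) P"

lemma ring_hom_bips_eval_y: "in_max Q \<Longrightarrow> ring_hom_bips (eval_y Q)"
  unfolding eval_y_def by (rule ring_hom_bips_eval_fps[OF ring_hom_bips_cst])

lemma alg_endo_subst_xy:
  assumes "in_max P" "in_max Q"
  shows "alg_endo (subst_xy P Q)"
proof -
  have r: "ring_hom_bips (eval_y Q)" using ring_hom_bips_eval_y[OF assms(2)] .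
  have "subst_xy P Q (cst c) = cst c" for c
    using eval_fps_const[OF r assms(1), of "fps_const c"] eval_fps_const[OF ring_hom_bips_cst assms(2), of c]
    by (simp add: subst_xy_def eval_y_def cst_def)
  then show ?thesis
    unfolding alg_endo_def subst_xy_def using eval_fps_add[OF r] eval_fps_mult[OF r assms(1)] by simp
qed

lemma subst_xy_vx: "in_max P \<Longrightarrow> in_max Q \<Longrightarrow> subst_xy P Q vx = P"
  unfolding subst_xy_def vx_def by (rule eval_fps_X[OF ring_hom_bips_eval_y])

lemma subst_xy_vy:
  assumes "in_max P" "in_max Q"
  shows "subst_xy P Q vy = Q"
  unfolding subst_xy_def vy_def
  using eval_fps_const[OF ring_hom_bips_eval_y[OF assms(2)] assms(1)]
    eval_fps_X[OF ring_hom_bips_cst assms(2)]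
  by (simp add: eval_y_def)

lemma subst_xy_of_y:
  assumes "in_max P" "in_max Q"
  shows "subst_xy P Q (of_y a) = eval_y Q a"
  unfolding subst_xy_def of_y_def
  using eval_fps_const[OF ring_hom_bips_eval_y[OF assms(2)] assms(1)] by simp

lemma eval_y_vy: "eval_y vy a = (of_y a :: 'a::comm_ring_1 bips)"
proof (rule fps_ext, rule fps_ext)
  fix n m
  have eq: "cst (a$i) * vy^i = (fps_const (fps_const (a$i) * fps_X^i) :: 'a bips)" for i
    by (simp add: cst_def vy_def)
  show "eval_y vy a $ n $ m = of_y a $ n $ m"
  proof (cases "n = 0")
    case True
    have "(\<Sum>i\<le>m. (fps_const (a$i) * fps_X^i) $ m) = (\<Sum>i\<le>m. if i = m then a$m else 0)"
      by (rule sum.cong) auto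
    then show ?thesis using True
      by (simp add: eval_y_def eval_fps_nth eq fps_sum_nth of_y_def)
  qed (simp add: eval_y_def eval_fps_nth eq fps_sum_nth of_y_def)
qed

lemma subst_xy_of_y_vy: "in_max P \<Longrightarrow> subst_xy P vy (of_y a) = of_y a"
  using subst_xy_of_y[of P vy a] by (simp add: eval_y_vy in_max_def vy_nth)

lemma alg_endo_in_max:
  assumes "alg_endo \<phi>" "in_max (\<phi> vx)" "in_max (\<phi> vy)" "in_max h"
  shows "in_max (\<phi> h)"
  using alg_endo_in_max_pow[OF assms(1-3), of 1 h] assms(4) by (simp add: in_max_iff_in_max_pow_1)

lemma alg_endo_eq_subst_xy:
  assumes "alg_endo \<phi>" "in_max (\<phi> vx)" "in_max (\<phi> vy)"
  shows "\<phi> = subst_xy (\<phi> vx) (\<phi> vy)"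
proof
  fix h
  show "\<phi> h = subst_xy (\<phi> vx) (\<phi> vy) h"
    by (rule alg_endo_eqI[OF assms(1) alg_endo_subst_xy[OF assms(2,3)]])
       (simp_all add: assms subst_xy_vx subst_xy_vy)
qed

lemma subst_xy_vx_vy: "subst_xy vx vy = id"
proof -
  have "id = subst_xy (id vx) (id vy)"
    by (rule alg_endo_eq_subst_xy[OF alg_endo_id]) (simp_all add: in_max_def vx_nth vy_nth)
  then show ?thesis by (metis id_apply)
qed

lemma subst_xy_comp:
  assumes "in_max P" "in_max Q" "in_max P'" "in_max Q'"
  shows "subst_xy P Q \<circ> subst_xy P' Q' = subst_xy (subst_xy P Q P') (subst_xy P Q Q')"
proof -
  have endo: "alg_endo (subst_xy P Q)" using alg_endo_subst_xy[OF assms(1,2)] .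
  have "in_max (subst_xy P Q P')" "in_max (subst_xy P Q Q')"
    using alg_endo_in_max[OF endo] assms by (simp_all add: subst_xy_vx subst_xy_vy)
  moreover have "alg_endo (subst_xy P Q \<circ> subst_xy P' Q')"
    by (intro alg_endo_comp alg_endo_subst_xy assms)
  ultimately have "subst_xy P Q \<circ> subst_xy P' Q' =
      subst_xy ((subst_xy P Q \<circ> subst_xy P' Q') vx) ((subst_xy P Q \<circ> subst_xy P' Q') vy)"
    using assms by (intro alg_endo_eq_subst_xy) (simp_all add: subst_xy_vx subst_xy_vy)
  then show ?thesis
    using assms by (simp add: subst_xy_vx subst_xy_vy)
qed

lemma is_aut_alg_endo: "is_aut \<phi> \<Longrightarrow> alg_endo \<phi>"
  by (simp add: is_aut_def alg_endo_def)

lemma is_aut_id: "is_aut id"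
  and is_aut_comp: "is_aut \<phi> \<Longrightarrow> is_aut \<psi> \<Longrightarrow> is_aut (\<phi> \<circ> \<psi>)"
  by (simp_all add: is_aut_def bij_comp)

lemma is_aut_subst_xy:
  assumes "in_max P" "in_max Q" "in_max P'" "in_max Q'"
    and "subst_xy P Q P' = vx" "subst_xy P Q Q' = vy" "subst_xy P' Q' P = vx" "subst_xy P' Q' Q = vy"
  shows "is_aut (subst_xy P Q)"
proof -
  have "subst_xy P' Q' \<circ> subst_xy P Q = id" "subst_xy P Q \<circ> subst_xy P' Q' = id"
    using assms by (simp_all add: subst_xy_comp subst_xy_vx_vy)
  then have "bij (subst_xy P Q)" by (rule o_bij)
  then show ?thesis
    using alg_endo_subst_xy[OF assms(1,2)] by (simp add: is_aut_def alg_endo_def)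
qed

lemma is_aut_scale:
  fixes p q :: "'a::field"
  assumes "p \<noteq> 0" "q \<noteq> 0"
  shows "is_aut (subst_xy (cst p * vx) (cst q * vy))"
proof -
  have inv: "cst (inverse p) * cst p = (1::'a bips)" "cst p * cst (inverse p) = (1::'a bips)"
    "cst (inverse q) * cst q = (1::'a bips)" "cst q * cst (inverse q) = (1::'a bips)"
    using assms by (simp_all flip: cst_mult add: cst_1)
  have m: "in_max (cst c * vx)" "in_max (cst c * vy)" for c :: 'a
    by (simp_all add: in_max_mult_left in_max_def vx_nth vy_nth)
  show ?thesis
    by (rule is_aut_subst_xy[OF m(1) m(2) m(1)[of "inverse p"] m(2)[of "inverse q"]])
       (simp_all add: alg_endo_simps[OF alg_endo_subst_xy] m subst_xy_vx subst_xy_vy inv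
         mult.assoc[symmetric])
qed

lemma subst_xy_scale_vx_vy:
  fixes p q :: "'a::field"
  shows "subst_xy (cst p * vx) (cst q * vy) vx = cst p * vx"
    and "subst_xy (cst p * vx) (cst q * vy) vy = cst q * vy"
  by (simp_all add: subst_xy_vx subst_xy_vy in_max_mult_left in_max_def vx_nth vy_nth)

lemma is_aut_translate_x:
  assumes "p $ 0 = 0"
  shows "is_aut (subst_xy (vx + of_y p) vy)"
proof -
  have m: "in_max (vx + of_y p)" "in_max (vx - of_y p)" and vy: "in_max vy"
    using assms by (simp_all add: in_max_def vx_nth vy_nth of_y_def)
  have "subst_xy (vx + of_y p) vy (of_y p) = of_y p" "subst_xy (vx - of_y p) vy (of_y p) = of_y p"
    using m by (simp_all add: subst_xy_of_y_vy)
  then show ?thesis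
    by (intro is_aut_subst_xy[OF m(1) vy m(2) vy])
       (simp_all add: alg_endo_simps[OF alg_endo_subst_xy[OF m(1) vy]]
         alg_endo_simps[OF alg_endo_subst_xy[OF m(2) vy]] subst_xy_vx subst_xy_vy m vy)
qed

lemma is_aut_shear_y:
  fixes v e :: "'a::field"
  shows "is_aut (subst_xy vx ((1 + cst v * vx) * vy + cst e * vx))"
proof -
  define Q where "Q = (1 + cst v * vx) * vy + cst e * vx"
  obtain z :: "'a bips" where z: "(1 + cst v * vx) * z = 1"
    using bips_invertible[of "1 + cst v * vx"] by (auto simp: cst_nth vx_nth)
  define Q' where "Q' = (vy - cst e * vx) * z"
  have m: "in_max vx" "in_max Q" "in_max Q'"
    by (simp_all add: Q_def Q'_def in_max_def bips_mult_nth_0_0 cst_nth vx_nth vy_nth)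
  note S = alg_endo_simps[OF alg_endo_subst_xy[OF m(1,2)]] subst_xy_vx[OF m(1,2)] subst_xy_vy[OF m(1,2)]
  note S' = alg_endo_simps[OF alg_endo_subst_xy[OF m(1,3)]] subst_xy_vx[OF m(1,3)] subst_xy_vy[OF m(1,3)]
  have "(1 + cst v * vx) * subst_xy vx Q z = 1"
    using arg_cong[OF z, of "subst_xy vx Q"] by (simp add: S)
  then have Sz: "subst_xy vx Q z = z"
    using z by (metis (no_types) mult.left_commute mult.right_neutral)
  have "subst_xy vx Q Q' = vy * ((1 + cst v * vx) * z)"
    by (simp add: Q'_def S Sz) (simp add: Q_def algebra_simps)
  then have "subst_xy vx Q Q' = vy" using z by simp
  moreover have "subst_xy vx Q' Q = ((1 + cst v * vx) * z) * (vy - cst e * vx) + cst e * vx"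
    by (simp add: Q_def S') (simp add: Q'_def mult_ac)
  then have "subst_xy vx Q' Q = vy" using z by simp
  moreover have "subst_xy vx Q vx = vx" "subst_xy vx Q' vx = vx"
    by (simp_all add: S S')
  ultimately show ?thesis
    unfolding Q_def[symmetric] by (intro is_aut_subst_xy[OF m(1,2) m(1,3)])
qed

text \<open>The coordinate change x \<mapsto> P, y \<mapsto> (1 + v P) y + e P is the composite of
  x \<mapsto> x + p(y) with the shear above.\<close>

lemma is_aut_coordinate_change:
  fixes v e :: "'a::field"
  assumes "p $ 0 = 0" and P: "P = vx + of_y p"
  shows "is_aut (subst_xy P ((1 + cst v * P) * vy + cst e * P))"
proof -
  have m: "in_max P" "in_max vx" "in_max vy" "in_max ((1 + cst v * vx) * vy + cst e * vx)"
    using assms by (simp_all add: in_max_def bips_mult_nth_0_0 vx_nth vy_nth of_y_def cst_nth)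
  have "subst_xy P vy \<circ> subst_xy vx ((1 + cst v * vx) * vy + cst e * vx) =
      subst_xy P ((1 + cst v * P) * vy + cst e * P)"
    by (simp add: subst_xy_comp[OF m(1,3,2,4)] alg_endo_simps[OF alg_endo_subst_xy[OF m(1,3)]]
        subst_xy_vx[OF m(1,3)] subst_xy_vy[OF m(1,3)])
  then show ?thesis
    using is_aut_comp[OF is_aut_translate_x[OF assms(1)] is_aut_shear_y[of v e]] P by simp
qed

section \<open>Contact equivalence\<close>

lemma contact_equiv_intro:
  assumes "is_aut \<phi>" "(u11 * u22 - u12 * u21) * w = 1"
  shows "contact_equiv g (u11 * \<phi> (fst g) + u12 * \<phi> (snd g), u21 * \<phi> (fst g) + u22 * \<phi> (snd g))"
  unfolding contact_equiv_def using assms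
  by (intro exI[of _ u11] exI[of _ u12] exI[of _ u21] exI[of _ u22] exI[of _ \<phi>]) auto

lemma contact_equiv_refl: "contact_equiv g g"
  using contact_equiv_intro[OF is_aut_id, of 1 1 0 0 1 g] by simp

lemma contact_equiv_trans:
  fixes f g h :: "'a::field bips \<times> 'a bips"
  assumes "contact_equiv f g" "contact_equiv g h"
  shows "contact_equiv f h"
proof -
  obtain u11 u12 u21 u22 \<phi> w where U: "(u11 * u22 - u12 * u21) * w = 1" "is_aut \<phi>"
    "fst g = u11 * \<phi> (fst f) + u12 * \<phi> (snd f)" "snd g = u21 * \<phi> (fst f) + u22 * \<phi> (snd f)"
    using assms(1) unfolding contact_equiv_def by blast
  obtain v11 v12 v21 v22 \<psi> w' where V: "(v11 * v22 - v12 * v21) * w' = 1" "is_aut \<psi>"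
    "fst h = v11 * \<psi> (fst g) + v12 * \<psi> (snd g)" "snd h = v21 * \<psi> (fst g) + v22 * \<psi> (snd g)"
    using assms(2) unfolding contact_equiv_def by blast
  have \<psi>: "alg_endo \<psi>" using V(2) by (rule is_aut_alg_endo)
  \<comment> \<open>the product matrix V \<cdot> \<psi>(U)\<close>
  define m11 m12 m21 m22 where "m11 = v11 * \<psi> u11 + v12 * \<psi> u21" and "m12 = v11 * \<psi> u12 + v12 * \<psi> u22"
    and "m21 = v21 * \<psi> u11 + v22 * \<psi> u21" and "m22 = v21 * \<psi> u12 + v22 * \<psi> u22"
  have "(\<psi> u11 * \<psi> u22 - \<psi> u12 * \<psi> u21) * \<psi> w = 1"
    using arg_cong[OF U(1), of \<psi>] by (simp add: alg_endo_simps[OF \<psi>])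
  moreover have "(m11 * m22 - m12 * m21) * (w' * \<psi> w) =
      ((v11 * v22 - v12 * v21) * w') * ((\<psi> u11 * \<psi> u22 - \<psi> u12 * \<psi> u21) * \<psi> w)"
    unfolding m11_def m12_def m21_def m22_def by algebra
  ultimately have "(m11 * m22 - m12 * m21) * (w' * \<psi> w) = 1"
    using V(1) by simp
  moreover have "fst h = m11 * (\<psi> \<circ> \<phi>) (fst f) + m12 * (\<psi> \<circ> \<phi>) (snd f)"
    "snd h = m21 * (\<psi> \<circ> \<phi>) (fst f) + m22 * (\<psi> \<circ> \<phi>) (snd f)"
    unfolding V(3,4) U(3,4) m11_def m12_def m21_def m22_def
    by (simp_all add: alg_endo_add[OF \<psi>] alg_endo_mult[OF \<psi>] algebra_simps)
  ultimately show ?thesis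
    unfolding contact_equiv_def using is_aut_comp[OF V(2) U(2)] by blast
qed

lemma contact_equiv_scale:
  fixes p q k1 k2 :: "'a::field"
  assumes "p \<noteq> 0" "q \<noteq> 0" "k1 \<noteq> 0" "k2 \<noteq> 0"
  shows "contact_equiv (g1, g2) (cst k1 * subst_xy (cst p * vx) (cst q * vy) g1,
    cst k2 * subst_xy (cst p * vx) (cst q * vy) g2)"
proof -
  have "(cst k1 * cst k2 - 0 * 0) * cst (inverse (k1 * k2)) = (1 :: 'a bips)"
    using assms by (simp flip: cst_mult add: cst_1 field_simps)
  then show ?thesis
    using contact_equiv_intro[OF is_aut_scale[OF assms(1,2)], of "cst k1" "cst k2" 0 0 _ "(g1, g2)"]
    by simp
qed

definition in_max_ideal :: "'a::comm_ring_1 bips \<Rightarrow> 'a bips \<Rightarrow> 'a bips \<Rightarrow> bool" where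
  "in_max_ideal N1 N2 h \<longleftrightarrow> (\<exists>a b. in_max a \<and> in_max b \<and> h = a * N1 + b * N2)"

lemma in_max_idealI: "in_max a \<Longrightarrow> in_max b \<Longrightarrow> in_max_ideal N1 N2 (a * N1 + b * N2)"
  unfolding in_max_ideal_def by blast

lemma in_max_ideal_add:
  assumes "in_max_ideal N1 N2 g" "in_max_ideal N1 N2 h"
  shows "in_max_ideal N1 N2 (g + h)"
proof -
  obtain a b a' b' where "in_max a" "in_max b" "g = a * N1 + b * N2"
    "in_max a'" "in_max b'" "h = a' * N1 + b' * N2"
    using assms unfolding in_max_ideal_def by blast
  then have "g + h = (a + a') * N1 + (b + b') * N2"
    by (simp add: algebra_simps)
  then show ?thesis
    using in_max_idealI[of "a + a'" "b + b'"] \<open>in_max a\<close> \<open>in_max a'\<close> \<open>in_max b\<close> \<open>in_max b'\<close>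
    by (simp add: in_max_add)
qed

lemma in_max_ideal_mult:
  assumes "in_max_ideal N1 N2 h"
  shows "in_max_ideal N1 N2 (r * h)"
proof -
  obtain a b where "in_max a" "in_max b" "h = a * N1 + b * N2"
    using assms unfolding in_max_ideal_def by blast
  then have "r * h = (r * a) * N1 + (r * b) * N2"
    by (simp add: algebra_simps)
  then show ?thesis
    using in_max_idealI[of "r * a" "r * b"] \<open>in_max a\<close> \<open>in_max b\<close> by (simp add: in_max_mult_left)
qed

lemma in_max_ideal_diff:
  "in_max_ideal N1 N2 g \<Longrightarrow> in_max_ideal N1 N2 h \<Longrightarrow> in_max_ideal N1 N2 (g - h)"
  using in_max_ideal_add[of N1 N2 g "(-1) * h"] in_max_ideal_mult[of N1 N2 h "-1"] by simp

text \<open>If g \<equiv> N modulo m \<cdot> (N1, N2), then g = U N with U \<equiv> 1 modulo m, so U is invertible.\<close>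

lemma contact_equiv_if_in_max_ideal:
  fixes N1 N2 :: "'a::field bips"
  assumes "in_max_ideal N1 N2 (g1 - N1)" "in_max_ideal N1 N2 (g2 - N2)"
  shows "contact_equiv (g1, g2) (N1, N2)"
proof -
  obtain a1 b1 a2 b2 where m: "in_max a1" "in_max b1" "in_max a2" "in_max b2"
    and g: "g1 = (1 + a1) * N1 + b1 * N2" "g2 = a2 * N1 + (1 + b2) * N2"
    using assms unfolding in_max_ideal_def by (auto simp: algebra_simps)
  define D where "D = (1 + a1) * (1 + b2) - b1 * a2"
  have "D $ 0 $ 0 = 1" using m by (simp add: D_def bips_mult_nth_0_0 in_max_def)
  then obtain w where w: "D * w = 1" using bips_invertible[of D] by auto
  \<comment> \<open>the inverse matrix w \<cdot> adj(U)\<close>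
  have "(w * (1 + b2)) * g1 + (- w * b1) * g2 = (D * w) * N1"
    unfolding g D_def by algebra
  moreover have "(- w * a2) * g1 + (w * (1 + a1)) * g2 = (D * w) * N2"
    unfolding g D_def by algebra
  moreover have "((w * (1 + b2)) * (w * (1 + a1)) - (- w * b1) * (- w * a2)) * D = (D * w) * (D * w)"
    unfolding D_def by algebra
  ultimately show ?thesis
    using contact_equiv_intro[OF is_aut_id, of "w * (1 + b2)" "w * (1 + a1)" "- w * b1" "- w * a2" D
        "(g1, g2)"] w
    by simp
qed

lemma contact_equiv_if_in_max_ideal_row_op:
  fixes N1 N2 :: "'a::field bips"
  assumes "in_max_ideal N1 N2 (g1 - N1)" "in_max_ideal N1 N2 (g2 - (N2 + c * N1))"
  shows "contact_equiv (g1, g2) (N1, N2)"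
proof -
  have "g2 - c * g1 - N2 = (g2 - (N2 + c * N1)) - c * (g1 - N1)"
    by (simp add: algebra_simps)
  then have "in_max_ideal N1 N2 (g2 - c * g1 - N2)"
    using assms by (metis in_max_ideal_diff in_max_ideal_mult)
  then have "contact_equiv (g1, g2 - c * g1) (N1, N2)"
    using contact_equiv_if_in_max_ideal[OF assms(1)] by simp
  moreover have "contact_equiv (g1, g2) (g1, g2 - c * g1)"
    using contact_equiv_intro[OF is_aut_id, of 1 1 0 "- c" 1 "(g1, g2)"] by simp
  ultimately show ?thesis
    using contact_equiv_trans by blast
qed

section \<open>The ideal m \<cdot> (x^3 + y^4, x^2 y + K y^4)\<close>

abbreviation nf1 :: "'a::comm_ring_1 bips" where
  "nf1 \<equiv> vx ^ 3 + vy ^ 4"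

abbreviation nf2 :: "'a::comm_ring_1 \<Rightarrow> 'a bips" where
  "nf2 K \<equiv> vx ^ 2 * vy + cst K * vy ^ 4"

lemma vy_power_6_in_max_ideal:
  fixes K :: "'a::field"
  shows "in_max_ideal nf1 (nf2 K) (vy ^ 6)"
proof -
  obtain w where w: "(1 + cst K ^ 3 * vy) * w = (1 :: 'a bips)"
    using bips_invertible[of "1 + cst K ^ 3 * vy"] by (auto simp: bips_mult_nth_0_0 vy_nth)
  have "vy ^ 6 * ((1 + cst K ^ 3 * vy) * w) =
      (w * (vy^2 + cst K * vx * vy)) * nf1 + (w * (- vx * vy - cst K * vx^2 + cst K^2 * vy^3)) * nf2 K"
    by algebra
  moreover have "in_max (w * (vy^2 + cst K * vx * vy))"
    "in_max (w * (- vx * vy - cst K * vx^2 + cst K^2 * vy^3))"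
    by (simp_all add: in_max_def bips_mult_nth_0_0 vx_nth vy_nth power2_eq_square power3_eq_cube)
  ultimately show ?thesis
    using w in_max_idealI by fastforce
qed

lemma monomial_6_in_max_ideal:
  fixes K :: "'a::field"
  assumes "i \<le> 6"
  shows "in_max_ideal nf1 (nf2 K) (vx ^ i * vy ^ (6 - i))"
proof -
  let ?I = "in_max_ideal nf1 (nf2 K)"
  have m: "in_max (vx * a)" "in_max (vy * a)" "in_max 0" for a :: "'a bips"
    by (simp_all add: in_max_def bips_mult_nth_0_0 vx_nth vy_nth)
  have y6: "?I (vy ^ 6)" by (rule vy_power_6_in_max_ideal)
  have xy5: "?I (vx * vy^5)"
  proof -
    have "vx * vy^5 = (vx * vy) * nf1 + (vy * (cst K * vy^2) - vx * vx) * nf2 K - (cst K^2 * vy) * vy^6"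
      by algebra
    then show ?thesis
      using in_max_ideal_diff[OF in_max_idealI in_max_ideal_mult[OF y6]] m(1,2) in_max_diff by metis
  qed
  have x2y4: "?I (vx^2 * vy^4)"
  proof -
    have "vx^2 * vy^4 = 0 * nf1 + (vy * vy^2) * nf2 K - (cst K * vy) * vy^6"
      by algebra
    then show ?thesis
      using in_max_ideal_diff[OF in_max_idealI in_max_ideal_mult[OF y6]] m by metis
  qed
  have x3y3: "?I (vx^3 * vy^3)"
  proof -
    have "vx^3 * vy^3 = 0 * nf1 + (vx * vy^2) * nf2 K - (cst K * vx) * vy^6"
      by algebra
    then show ?thesis
      using in_max_ideal_diff[OF in_max_idealI in_max_ideal_mult[OF y6]] m by metis
  qed
  have x4y2: "?I (vx^4 * vy^2)"
  proof -
    have "vx^4 * vy^2 = 0 * nf1 + (vx * (vx * vy)) * nf2 K - (cst K * vx) * (vx * vy^5)"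
      by algebra
    then show ?thesis
      using in_max_ideal_diff[OF in_max_idealI in_max_ideal_mult[OF xy5]] m by metis
  qed
  have x5y: "?I (vx^5 * vy)"
  proof -
    have "vx^5 * vy = 0 * nf1 + (vx * vx^2) * nf2 K - (cst K * vx) * (vx^2 * vy^4)"
      by algebra
    then show ?thesis
      using in_max_ideal_diff[OF in_max_idealI in_max_ideal_mult[OF x2y4]] m by metis
  qed
  have x6: "?I (vx^6)"
  proof -
    have "vx^6 = (vx * vx^2) * nf1 + 0 * nf2 K - vx * (vx^2 * vy^4)"
      by algebra
    then show ?thesis
      using in_max_ideal_diff[OF in_max_idealI in_max_ideal_mult[OF x2y4]] m by metis
  qed
  from assms have "i \<in> {0, 1, 2, 3, 4, 5, 6}" by auto
  then show ?thesis
    using y6 xy5 x2y4 x3y3 x4y2 x5y x6 by auto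
qed

lemma in_max_pow_6_in_max_ideal:
  fixes K :: "'a::field"
  assumes "in_max_pow 6 h"
  shows "in_max_ideal nf1 (nf2 K) h"
  using assms
proof (induction rule: in_max_pow_induct)
  case (monomial i r)
  then show ?case
    using in_max_ideal_mult[OF monomial_6_in_max_ideal[OF monomial]] by (simp add: mult.commute)
qed (rule in_max_ideal_add)

lemma in_max_ideal_of_expansion:
  fixes K :: "'a::field"
  assumes "T = N + (vx * a1 + vy * a2) * (vx^3 + vy^4) + (vx * b1 + vy * b2) * (vx^2 * vy + cst K * vy^4)
      + c1 * (vx * vy^3) + c2 * (vx * vy^4) + H"
    and "c1 = 0" "c2 = 0" "in_max_pow 6 H"
  shows "in_max_ideal nf1 (nf2 K) (T - N)"
proof -
  have "T - N = (vx * a1 + vy * a2) * nf1 + (vx * b1 + vy * b2) * nf2 K + H"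
    using assms(1-3) by simp
  then show ?thesis
    using in_max_ideal_add[OF in_max_idealI in_max_pow_6_in_max_ideal[OF assms(4)]] in_max_linear
    by metis
qed

section \<open>The normal form computation\<close>

definition prenormal :: "'a::comm_ring_1 fps \<Rightarrow> 'a fps \<Rightarrow> 'a fps \<Rightarrow> 'a bips \<times> 'a bips" where
  "prenormal A b C = (vx^3 + of_y A * vx * vy^3 + of_y b * vy^4, vx^2 * vy + of_y C * vy^4)"

definition xy4_coeff_fst :: "'r \<Rightarrow> 'r \<Rightarrow> 'r \<Rightarrow> 'r \<Rightarrow> 'r \<Rightarrow> 'r \<Rightarrow> 'r \<Rightarrow> 'r::comm_ring_1" where
  "xy4_coeff_fst A0 A1 b1 e d v K = 4*v - 3*d*K^2 + 3*d^2 + 4*e*d*K - 6*e^2*K^2 + 12*e^2*d - 4*e^3*K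
     - e^4 + b1*K + 5*b1*e + A1 + A0*d*K - 3*A0*e*K^2 + 6*A0*e*d - 3*A0*e^2*K - A0*e^3"

definition xy4_coeff_snd :: "'r \<Rightarrow> 'r \<Rightarrow> 'r \<Rightarrow> 'r \<Rightarrow> 'r \<Rightarrow> 'r \<Rightarrow> 'r \<Rightarrow> 'r::comm_ring_1" where
  "xy4_coeff_snd C0 C1 e d u v K = - v*K + 2*u + d^2*K - 3*e*d*K^2 + 3*e*d^2 + C1*K + 5*C1*e + 4*C0*v
     + 4*C0*e*d*K - 6*C0*e^2*K^2 + 12*C0*e^2*d - 4*C0*e^3*K - C0*e^4"

text \<open>The pair with A, b, C truncated to degree 1 in y (and b(0) = 1) after the substitution
  x \<mapsto> P, y \<mapsto> Q, expanded by computer algebra. The last summand collects the monomials of degree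
  at least 6; the coefficients of x y^3, x y^4 and y^4 are killed by the choice of e, d, v, u, K.\<close>

lemma prenormal_fst_expansion:
  fixes x y :: "'r::idom"
  assumes "P = x + d*y^2 + u*y^3" "Q = (1 + v*P)*y + e*P"
  shows "P^3 + (A0 + A1*Q)*P*Q^3 + (1 + b1*Q)*Q^4 =
      (x^3 + y^4)
      + (x*(e^4 + A0*e^3 + 4*y*e^3*v + 5*y*b1*e^4 + 4*y*A1*e^3 + 3*y*A0*e^2*v + x*b1*e^5 + x*A1*e^4)
          + y*(- 3*d*K + 4*e*d - 6*e^2*K + b1 + A0*d - 3*A0*e*K + 12*y*e^2*v + 4*y*e^4*d
          + 10*y*b1*e^3 + 6*y*A1*e^2 + 6*y*A0*e*v + 4*y*A0*e^3*d))*(x^3 + y^4)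
      + (x*(3*d*K - 4*e*d + 6*e^2*K + 4*e^3 - b1 - A0*d + 3*A0*e*K + 3*A0*e^2) + y*(3*d + 6*e^2
          + 3*A0*e + 3*y*u + 12*y*e*v + 12*y*e^3*d + 10*y*b1*e^2 + 4*y*A1*e + 3*y*A0*v
          + 9*y*A0*e^2*d))*(x^2*y + K*y^4)
      + (4*e + A0)*(x*y^3)
      + xy4_coeff_fst A0 A1 b1 e d v K * (x*y^4)
      + (x^0*y^6*(- 3*u*K + 4*d*v + d^3 - 12*e*v*K + 4*e*u - 12*e^2*v
            + 6*e^2*d^2 - 12*e^3*d*K - 4*e^4*d + 5*b1*e*d - 10*b1*e^2*K - 10*b1*e^3
            + A1*d - 4*A1*e*K - 6*A1*e^2 - 3*A0*v*K + A0*u - 6*A0*e*v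
            + 3*A0*e*d^2 - 9*A0*e^2*d*K - 4*A0*e^3*d)
        + x^0*y^7*(4*u*v + 3*d^2*u + 12*e*d^2*v + 12*e^2*d*u + 4*e^3*d^3 + 5*b1*d*v + 5*b1*e*u
            + 10*b1*e^2*d^2 + A1*u + 4*A1*e*d^2 + 3*A0*d^2*v + 6*A0*e*d*u + 3*A0*e^2*d^3)
        + x^0*y^8*(3*d*u^2 + 6*d^2*v^2 + 24*e*d*u*v + 6*e^2*u^2 + 12*e^2*d^3*v + 12*e^3*d^2*u
            + e^4*d^4 + 5*b1*u*v + 20*b1*e*d^2*v + 20*b1*e^2*d*u + 10*b1*e^3*d^3 + 4*A1*d^2*v
            + 8*A1*e*d*u + 6*A1*e^2*d^3 + 6*A0*d*u*v + 3*A0*e*u^2 + 6*A0*e*d^3*v + 9*A0*e^2*d^2*u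
            + A0*e^3*d^4)
        + x^0*y^9*(u^3 + 12*d*u*v^2 + 12*e*u^2*v + 12*e*d^3*v^2 + 36*e^2*d^2*u*v + 12*e^3*d*u^2
            + 4*e^3*d^4*v + 4*e^4*d^3*u + 10*b1*d^2*v^2 + 40*b1*e*d*u*v + 10*b1*e^2*u^2
            + 30*b1*e^2*d^3*v + 30*b1*e^3*d^2*u + 5*b1*e^4*d^4 + 8*A1*d*u*v + 4*A1*e*u^2
            + 12*A1*e*d^3*v + 18*A1*e^2*d^2*u + 4*A1*e^3*d^4 + 3*A0*u^2*v + 3*A0*d^3*v^2
            + 18*A0*e*d^2*u*v + 9*A0*e^2*d*u^2 + 3*A0*e^2*d^4*v + 4*A0*e^3*d^3*u)
        + x^0*y^10*(6*u^2*v^2 + 4*d^3*v^3 + 36*e*d^2*u*v^2 + 36*e^2*d*u^2*v + 6*e^2*d^4*v^2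
            + 4*e^3*u^3 + 16*e^3*d^3*u*v + 6*e^4*d^2*u^2 + 20*b1*d*u*v^2 + 20*b1*e*u^2*v
            + 30*b1*e*d^3*v^2 + 90*b1*e^2*d^2*u*v + 30*b1*e^3*d*u^2 + 20*b1*e^3*d^4*v
            + 20*b1*e^4*d^3*u + b1*e^5*d^5 + 4*A1*u^2*v + 6*A1*d^3*v^2 + 36*A1*e*d^2*u*v
            + 18*A1*e^2*d*u^2 + 12*A1*e^2*d^4*v + 16*A1*e^3*d^3*u + A1*e^4*d^5 + 9*A0*d^2*u*v^2
            + 18*A0*e*d*u^2*v + 3*A0*e*d^4*v^2 + 3*A0*e^2*u^3 + 12*A0*e^2*d^3*u*v
            + 6*A0*e^3*d^2*u^2)
        + x^0*y^11*(12*d^2*u*v^3 + 36*e*d*u^2*v^2 + 4*e*d^4*v^3 + 12*e^2*u^3*v + 24*e^2*d^3*u*v^2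
            + 24*e^3*d^2*u^2*v + 4*e^4*d*u^3 + 10*b1*u^2*v^2 + 10*b1*d^3*v^3 + 90*b1*e*d^2*u*v^2
            + 90*b1*e^2*d*u^2*v + 30*b1*e^2*d^4*v^2 + 10*b1*e^3*u^3 + 80*b1*e^3*d^3*u*v
            + 30*b1*e^4*d^2*u^2 + 5*b1*e^4*d^5*v + 5*b1*e^5*d^4*u + 18*A1*d^2*u*v^2
            + 36*A1*e*d*u^2*v + 12*A1*e*d^4*v^2 + 6*A1*e^2*u^3 + 48*A1*e^2*d^3*u*v
            + 24*A1*e^3*d^2*u^2 + 4*A1*e^3*d^5*v + 5*A1*e^4*d^4*u + 9*A0*d*u^2*v^2 + A0*d^4*v^3
            + 6*A0*e*u^3*v + 12*A0*e*d^3*u*v^2 + 18*A0*e^2*d^2*u^2*v + 4*A0*e^3*d*u^3)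
        + x^0*y^12*(12*d*u^2*v^3 + d^4*v^4 + 12*e*u^3*v^2 + 16*e*d^3*u*v^3 + 36*e^2*d^2*u^2*v^2
            + 16*e^3*d*u^3*v + e^4*u^4 + 30*b1*d^2*u*v^3 + 90*b1*e*d*u^2*v^2 + 20*b1*e*d^4*v^3
            + 30*b1*e^2*u^3*v + 120*b1*e^2*d^3*u*v^2 + 120*b1*e^3*d^2*u^2*v + 10*b1*e^3*d^5*v^2
            + 20*b1*e^4*d*u^3 + 25*b1*e^4*d^4*u*v + 10*b1*e^5*d^3*u^2 + 18*A1*d*u^2*v^2
            + 4*A1*d^4*v^3 + 12*A1*e*u^3*v + 48*A1*e*d^3*u*v^2 + 72*A1*e^2*d^2*u^2*v
            + 6*A1*e^2*d^5*v^2 + 16*A1*e^3*d*u^3 + 20*A1*e^3*d^4*u*v + 10*A1*e^4*d^3*u^2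
            + 3*A0*u^3*v^2 + 4*A0*d^3*u*v^3 + 18*A0*e*d^2*u^2*v^2 + 12*A0*e^2*d*u^3*v + A0*e^3*u^4)
        + x^0*y^13*(4*u^3*v^3 + 4*d^3*u*v^4 + 24*e*d^2*u^2*v^3 + 24*e^2*d*u^3*v^2 + 4*e^3*u^4*v
            + 30*b1*d*u^2*v^3 + 5*b1*d^4*v^4 + 30*b1*e*u^3*v^2 + 80*b1*e*d^3*u*v^3
            + 180*b1*e^2*d^2*u^2*v^2 + 10*b1*e^2*d^5*v^3 + 80*b1*e^3*d*u^3*v + 50*b1*e^3*d^4*u*v^2
            + 5*b1*e^4*u^4 + 50*b1*e^4*d^3*u^2*v + 10*b1*e^5*d^2*u^3 + 6*A1*u^3*v^2
            + 16*A1*d^3*u*v^3 + 72*A1*e*d^2*u^2*v^2 + 4*A1*e*d^5*v^3 + 48*A1*e^2*d*u^3*v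
            + 30*A1*e^2*d^4*u*v^2 + 4*A1*e^3*u^4 + 40*A1*e^3*d^3*u^2*v + 10*A1*e^4*d^2*u^3
            + 6*A0*d^2*u^2*v^3 + 12*A0*e*d*u^3*v^2 + 3*A0*e^2*u^4*v)
        + x^0*y^14*(6*d^2*u^2*v^4 + 16*e*d*u^3*v^3 + 6*e^2*u^4*v^2 + 10*b1*u^3*v^3 + 20*b1*d^3*u*v^4
            + 120*b1*e*d^2*u^2*v^3 + 5*b1*e*d^5*v^4 + 120*b1*e^2*d*u^3*v^2 + 50*b1*e^2*d^4*u*v^3
            + 20*b1*e^3*u^4*v + 100*b1*e^3*d^3*u^2*v^2 + 50*b1*e^4*d^2*u^3*v + 5*b1*e^5*d*u^4
            + 24*A1*d^2*u^2*v^3 + A1*d^5*v^4 + 48*A1*e*d*u^3*v^2 + 20*A1*e*d^4*u*v^3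
            + 12*A1*e^2*u^4*v + 60*A1*e^2*d^3*u^2*v^2 + 40*A1*e^3*d^2*u^3*v + 5*A1*e^4*d*u^4
            + 4*A0*d*u^3*v^3 + 3*A0*e*u^4*v^2)
        + x^0*y^15*(4*d*u^3*v^4 + 4*e*u^4*v^3 + 30*b1*d^2*u^2*v^4 + b1*d^5*v^5 + 80*b1*e*d*u^3*v^3
            + 25*b1*e*d^4*u*v^4 + 30*b1*e^2*u^4*v^2 + 100*b1*e^2*d^3*u^2*v^3
            + 100*b1*e^3*d^2*u^3*v^2 + 25*b1*e^4*d*u^4*v + b1*e^5*u^5 + 16*A1*d*u^3*v^3
            + 5*A1*d^4*u*v^4 + 12*A1*e*u^4*v^2 + 40*A1*e*d^3*u^2*v^3 + 60*A1*e^2*d^2*u^3*v^2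
            + 20*A1*e^3*d*u^4*v + A1*e^4*u^5 + A0*u^4*v^3)
        + x^0*y^16*(u^4*v^4 + 20*b1*d*u^3*v^4 + 5*b1*d^4*u*v^5 + 20*b1*e*u^4*v^3
            + 50*b1*e*d^3*u^2*v^4 + 100*b1*e^2*d^2*u^3*v^3 + 50*b1*e^3*d*u^4*v^2 + 5*b1*e^4*u^5*v
            + 4*A1*u^4*v^3 + 10*A1*d^3*u^2*v^4 + 40*A1*e*d^2*u^3*v^3 + 30*A1*e^2*d*u^4*v^2
            + 4*A1*e^3*u^5*v)
        + x^0*y^17*(5*b1*u^4*v^4 + 10*b1*d^3*u^2*v^5 + 50*b1*e*d^2*u^3*v^4 + 50*b1*e^2*d*u^4*v^3
            + 10*b1*e^3*u^5*v^2 + 10*A1*d^2*u^3*v^4 + 20*A1*e*d*u^4*v^3 + 6*A1*e^2*u^5*v^2)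
        + x^0*y^18*(10*b1*d^2*u^3*v^5 + 25*b1*e*d*u^4*v^4 + 10*b1*e^2*u^5*v^3 + 5*A1*d*u^4*v^4
            + 4*A1*e*u^5*v^3)
        + x^0*y^19*(5*b1*d*u^4*v^5 + 5*b1*e*u^5*v^4 + A1*u^5*v^4)
        + x^0*y^20*(b1*u^5*v^5)
        + x^1*y^5*(6*d*u + 24*e*d*v + 12*e^2*u - 4*e^3*v + 12*e^3*d^2 + 5*b1*v
            + 20*b1*e^2*d - 5*b1*e^4 + 8*A1*e*d - 4*A1*e^3 + 6*A0*d*v + 6*A0*e*u - 3*A0*e^2*v
            + 9*A0*e^2*d^2)
        + x^1*y^6*(3*u^2 + 12*d*v^2 + 24*e*u*v + 36*e^2*d^2*v + 24*e^3*d*u + 4*e^4*d^3 + 40*b1*e*d*v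
            + 20*b1*e^2*u + 30*b1*e^3*d^2 + 8*A1*d*v + 8*A1*e*u + 18*A1*e^2*d^2 + 6*A0*u*v
            + 18*A0*e*d^2*v + 18*A0*e^2*d*u + 4*A0*e^3*d^3)
        + x^1*y^7*(12*u*v^2 + 36*e*d^2*v^2 + 72*e^2*d*u*v + 12*e^3*u^2 + 16*e^3*d^3*v + 12*e^4*d^2*u
            + 20*b1*d*v^2 + 40*b1*e*u*v + 90*b1*e^2*d^2*v + 60*b1*e^3*d*u + 20*b1*e^4*d^3 + 8*A1*u*v
            + 36*A1*e*d^2*v + 36*A1*e^2*d*u + 16*A1*e^3*d^3 + 9*A0*d^2*v^2 + 36*A0*e*d*u*v
            + 9*A0*e^2*u^2 + 12*A0*e^2*d^3*v + 12*A0*e^3*d^2*u)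
        + x^1*y^8*(12*d^2*v^3 + 72*e*d*u*v^2 + 36*e^2*u^2*v + 24*e^2*d^3*v^2 + 48*e^3*d^2*u*v
            + 12*e^4*d*u^2 + 20*b1*u*v^2 + 90*b1*e*d^2*v^2 + 180*b1*e^2*d*u*v + 30*b1*e^3*u^2
            + 80*b1*e^3*d^3*v + 60*b1*e^4*d^2*u + 5*b1*e^5*d^4 + 18*A1*d^2*v^2 + 72*A1*e*d*u*v
            + 18*A1*e^2*u^2 + 48*A1*e^2*d^3*v + 48*A1*e^3*d^2*u + 5*A1*e^4*d^4 + 18*A0*d*u*v^2
            + 18*A0*e*u^2*v + 12*A0*e*d^3*v^2 + 36*A0*e^2*d^2*u*v + 12*A0*e^3*d*u^2)
        + x^1*y^9*(24*d*u*v^3 + 36*e*u^2*v^2 + 16*e*d^3*v^3 + 72*e^2*d^2*u*v^2 + 48*e^3*d*u^2*v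
            + 4*e^4*u^3 + 30*b1*d^2*v^3 + 180*b1*e*d*u*v^2 + 90*b1*e^2*u^2*v + 120*b1*e^2*d^3*v^2
            + 240*b1*e^3*d^2*u*v + 60*b1*e^4*d*u^2 + 25*b1*e^4*d^4*v + 20*b1*e^5*d^3*u
            + 36*A1*d*u*v^2 + 36*A1*e*u^2*v + 48*A1*e*d^3*v^2 + 144*A1*e^2*d^2*u*v + 48*A1*e^3*d*u^2
            + 20*A1*e^3*d^4*v + 20*A1*e^4*d^3*u + 9*A0*u^2*v^2 + 4*A0*d^3*v^3 + 36*A0*e*d^2*u*v^2
            + 36*A0*e^2*d*u^2*v + 4*A0*e^3*u^3)
        + x^1*y^10*(12*u^2*v^3 + 4*d^3*v^4 + 48*e*d^2*u*v^3 + 72*e^2*d*u^2*v^2 + 16*e^3*u^3*v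
            + 60*b1*d*u*v^3 + 90*b1*e*u^2*v^2 + 80*b1*e*d^3*v^3 + 360*b1*e^2*d^2*u*v^2
            + 240*b1*e^3*d*u^2*v + 50*b1*e^3*d^4*v^2 + 20*b1*e^4*u^3 + 100*b1*e^4*d^3*u*v
            + 30*b1*e^5*d^2*u^2 + 18*A1*u^2*v^2 + 16*A1*d^3*v^3 + 144*A1*e*d^2*u*v^2
            + 144*A1*e^2*d*u^2*v + 30*A1*e^2*d^4*v^2 + 16*A1*e^3*u^3 + 80*A1*e^3*d^3*u*v
            + 30*A1*e^4*d^2*u^2 + 12*A0*d^2*u*v^3 + 36*A0*e*d*u^2*v^2 + 12*A0*e^2*u^3*v)
        + x^1*y^11*(12*d^2*u*v^4 + 48*e*d*u^2*v^3 + 24*e^2*u^3*v^2 + 30*b1*u^2*v^3 + 20*b1*d^3*v^4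
            + 240*b1*e*d^2*u*v^3 + 360*b1*e^2*d*u^2*v^2 + 50*b1*e^2*d^4*v^3 + 80*b1*e^3*u^3*v
            + 200*b1*e^3*d^3*u*v^2 + 150*b1*e^4*d^2*u^2*v + 20*b1*e^5*d*u^3 + 48*A1*d^2*u*v^3
            + 144*A1*e*d*u^2*v^2 + 20*A1*e*d^4*v^3 + 48*A1*e^2*u^3*v + 120*A1*e^2*d^3*u*v^2
            + 120*A1*e^3*d^2*u^2*v + 20*A1*e^4*d*u^3 + 12*A0*d*u^2*v^3 + 12*A0*e*u^3*v^2)
        + x^1*y^12*(12*d*u^2*v^4 + 16*e*u^3*v^3 + 60*b1*d^2*u*v^4 + 240*b1*e*d*u^2*v^3
            + 25*b1*e*d^4*v^4 + 120*b1*e^2*u^3*v^2 + 200*b1*e^2*d^3*u*v^3 + 300*b1*e^3*d^2*u^2*v^2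
            + 100*b1*e^4*d*u^3*v + 5*b1*e^5*u^4 + 48*A1*d*u^2*v^3 + 5*A1*d^4*v^4 + 48*A1*e*u^3*v^2
            + 80*A1*e*d^3*u*v^3 + 180*A1*e^2*d^2*u^2*v^2 + 80*A1*e^3*d*u^3*v + 5*A1*e^4*u^4
            + 4*A0*u^3*v^3)
        + x^1*y^13*(4*u^3*v^4 + 60*b1*d*u^2*v^4 + 5*b1*d^4*v^5 + 80*b1*e*u^3*v^3
            + 100*b1*e*d^3*u*v^4 + 300*b1*e^2*d^2*u^2*v^3 + 200*b1*e^3*d*u^3*v^2 + 25*b1*e^4*u^4*v
            + 16*A1*u^3*v^3 + 20*A1*d^3*u*v^4 + 120*A1*e*d^2*u^2*v^3 + 120*A1*e^2*d*u^3*v^2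
            + 20*A1*e^3*u^4*v)
        + x^1*y^14*(20*b1*u^3*v^4 + 20*b1*d^3*u*v^5 + 150*b1*e*d^2*u^2*v^4 + 200*b1*e^2*d*u^3*v^3
            + 50*b1*e^3*u^4*v^2 + 30*A1*d^2*u^2*v^4 + 80*A1*e*d*u^3*v^3 + 30*A1*e^2*u^4*v^2)
        + x^1*y^15*(30*b1*d^2*u^2*v^5 + 100*b1*e*d*u^3*v^4 + 50*b1*e^2*u^4*v^3 + 20*A1*d*u^3*v^4
            + 20*A1*e*u^4*v^3)
        + x^1*y^16*(20*b1*d*u^3*v^5 + 25*b1*e*u^4*v^4 + 5*A1*u^4*v^4)
        + x^1*y^17*(5*b1*u^4*v^5)
        + x^2*y^4*(6*v^2 + 36*e^2*d*v + 12*e^3*u + 6*e^4*d^2 + 20*b1*e*v + 30*b1*e^3*d - b1*e^5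
            + 4*A1*v + 18*A1*e^2*d - A1*e^4 + 18*A0*e*d*v + 9*A0*e^2*u + 6*A0*e^3*d^2)
        + x^2*y^5*(36*e*d*v^2 + 36*e^2*u*v + 24*e^3*d^2*v + 12*e^4*d*u + 10*b1*v^2 + 90*b1*e^2*d*v
            + 30*b1*e^3*u + 30*b1*e^4*d^2 + 36*A1*e*d*v + 18*A1*e^2*u + 24*A1*e^3*d^2 + 9*A0*d*v^2
            + 18*A0*e*u*v + 18*A0*e^2*d^2*v + 12*A0*e^3*d*u)
        + x^2*y^6*(12*d*v^3 + 36*e*u*v^2 + 36*e^2*d^2*v^2 + 48*e^3*d*u*v + 6*e^4*u^2 + 90*b1*e*d*v^2
            + 90*b1*e^2*u*v + 120*b1*e^3*d^2*v + 60*b1*e^4*d*u + 10*b1*e^5*d^3 + 18*A1*d*v^2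
            + 36*A1*e*u*v + 72*A1*e^2*d^2*v + 48*A1*e^3*d*u + 10*A1*e^4*d^3 + 9*A0*u*v^2
            + 18*A0*e*d^2*v^2 + 36*A0*e^2*d*u*v + 6*A0*e^3*u^2)
        + x^2*y^7*(12*u*v^3 + 24*e*d^2*v^3 + 72*e^2*d*u*v^2 + 24*e^3*u^2*v + 30*b1*d*v^3
            + 90*b1*e*u*v^2 + 180*b1*e^2*d^2*v^2 + 240*b1*e^3*d*u*v + 30*b1*e^4*u^2
            + 50*b1*e^4*d^3*v + 30*b1*e^5*d^2*u + 18*A1*u*v^2 + 72*A1*e*d^2*v^2 + 144*A1*e^2*d*u*v
            + 24*A1*e^3*u^2 + 40*A1*e^3*d^3*v + 30*A1*e^4*d^2*u + 6*A0*d^2*v^3 + 36*A0*e*d*u*v^2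
            + 18*A0*e^2*u^2*v)
        + x^2*y^8*(6*d^2*v^4 + 48*e*d*u*v^3 + 36*e^2*u^2*v^2 + 30*b1*u*v^3 + 120*b1*e*d^2*v^3
            + 360*b1*e^2*d*u*v^2 + 120*b1*e^3*u^2*v + 100*b1*e^3*d^3*v^2 + 150*b1*e^4*d^2*u*v
            + 30*b1*e^5*d*u^2 + 24*A1*d^2*v^3 + 144*A1*e*d*u*v^2 + 72*A1*e^2*u^2*v
            + 60*A1*e^2*d^3*v^2 + 120*A1*e^3*d^2*u*v + 30*A1*e^4*d*u^2 + 12*A0*d*u*v^3
            + 18*A0*e*u^2*v^2)
        + x^2*y^9*(12*d*u*v^4 + 24*e*u^2*v^3 + 30*b1*d^2*v^4 + 240*b1*e*d*u*v^3 + 180*b1*e^2*u^2*v^2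
            + 100*b1*e^2*d^3*v^3 + 300*b1*e^3*d^2*u*v^2 + 150*b1*e^4*d*u^2*v + 10*b1*e^5*u^3
            + 48*A1*d*u*v^3 + 72*A1*e*u^2*v^2 + 40*A1*e*d^3*v^3 + 180*A1*e^2*d^2*u*v^2
            + 120*A1*e^3*d*u^2*v + 10*A1*e^4*u^3 + 6*A0*u^2*v^3)
        + x^2*y^10*(6*u^2*v^4 + 60*b1*d*u*v^4 + 120*b1*e*u^2*v^3 + 50*b1*e*d^3*v^4
            + 300*b1*e^2*d^2*u*v^3 + 300*b1*e^3*d*u^2*v^2 + 50*b1*e^4*u^3*v + 24*A1*u^2*v^3
            + 10*A1*d^3*v^4 + 120*A1*e*d^2*u*v^3 + 180*A1*e^2*d*u^2*v^2 + 40*A1*e^3*u^3*v)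
        + x^2*y^11*(30*b1*u^2*v^4 + 10*b1*d^3*v^5 + 150*b1*e*d^2*u*v^4 + 300*b1*e^2*d*u^2*v^3
            + 100*b1*e^3*u^3*v^2 + 30*A1*d^2*u*v^4 + 120*A1*e*d*u^2*v^3 + 60*A1*e^2*u^3*v^2)
        + x^2*y^12*(30*b1*d^2*u*v^5 + 150*b1*e*d*u^2*v^4 + 100*b1*e^2*u^3*v^3 + 30*A1*d*u^2*v^4
            + 40*A1*e*u^3*v^3)
        + x^2*y^13*(30*b1*d*u^2*v^5 + 50*b1*e*u^3*v^4 + 10*A1*u^3*v^4)
        + x^2*y^14*(10*b1*u^3*v^5)
        + x^3*y^3*(12*e*v^2 + 16*e^3*d*v + 4*e^4*u + 30*b1*e^2*v + 20*b1*e^4*d + 12*A1*e*v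
            + 16*A1*e^3*d + 3*A0*v^2 + 12*A0*e^2*d*v + 4*A0*e^3*u)
        + x^3*y^4*(4*v^3 + 24*e^2*d*v^2 + 16*e^3*u*v + 30*b1*e*v^2 + 80*b1*e^3*d*v + 20*b1*e^4*u
            + 10*b1*e^5*d^2 + 6*A1*v^2 + 48*A1*e^2*d*v + 16*A1*e^3*u + 10*A1*e^4*d^2 + 12*A0*e*d*v^2
            + 12*A0*e^2*u*v)
        + x^3*y^5*(16*e*d*v^3 + 24*e^2*u*v^2 + 10*b1*v^3 + 120*b1*e^2*d*v^2 + 80*b1*e^3*u*v
            + 50*b1*e^4*d^2*v + 20*b1*e^5*d*u + 48*A1*e*d*v^2 + 48*A1*e^2*u*v + 40*A1*e^3*d^2*v
            + 20*A1*e^4*d*u + 4*A0*d*v^3 + 12*A0*e*u*v^2)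
        + x^3*y^6*(4*d*v^4 + 16*e*u*v^3 + 80*b1*e*d*v^3 + 120*b1*e^2*u*v^2 + 100*b1*e^3*d^2*v^2
            + 100*b1*e^4*d*u*v + 10*b1*e^5*u^2 + 16*A1*d*v^3 + 48*A1*e*u*v^2 + 60*A1*e^2*d^2*v^2
            + 80*A1*e^3*d*u*v + 10*A1*e^4*u^2 + 4*A0*u*v^3)
        + x^3*y^7*(4*u*v^4 + 20*b1*d*v^4 + 80*b1*e*u*v^3 + 100*b1*e^2*d^2*v^3 + 200*b1*e^3*d*u*v^2
            + 50*b1*e^4*u^2*v + 16*A1*u*v^3 + 40*A1*e*d^2*v^3 + 120*A1*e^2*d*u*v^2
            + 40*A1*e^3*u^2*v)
        + x^3*y^8*(20*b1*u*v^4 + 50*b1*e*d^2*v^4 + 200*b1*e^2*d*u*v^3 + 100*b1*e^3*u^2*v^2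
            + 10*A1*d^2*v^4 + 80*A1*e*d*u*v^3 + 60*A1*e^2*u^2*v^2)
        + x^3*y^9*(10*b1*d^2*v^5 + 100*b1*e*d*u*v^4 + 100*b1*e^2*u^2*v^3 + 20*A1*d*u*v^4
            + 40*A1*e*u^2*v^3)
        + x^3*y^10*(20*b1*d*u*v^5 + 50*b1*e*u^2*v^4 + 10*A1*u^2*v^4)
        + x^3*y^11*(10*b1*u^2*v^5)
        + x^4*y^2*(6*e^2*v^2 + 20*b1*e^3*v + 5*b1*e^5*d + 12*A1*e^2*v + 5*A1*e^4*d + 3*A0*e*v^2)
        + x^4*y^3*(4*e*v^3 + 30*b1*e^2*v^2 + 25*b1*e^4*d*v + 5*b1*e^5*u + 12*A1*e*v^2
            + 20*A1*e^3*d*v + 5*A1*e^4*u + A0*v^3)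
        + x^4*y^4*(v^4 + 20*b1*e*v^3 + 50*b1*e^3*d*v^2 + 25*b1*e^4*u*v + 4*A1*v^3 + 30*A1*e^2*d*v^2
            + 20*A1*e^3*u*v)
        + x^4*y^5*(5*b1*v^4 + 50*b1*e^2*d*v^3 + 50*b1*e^3*u*v^2 + 20*A1*e*d*v^3 + 30*A1*e^2*u*v^2)
        + x^4*y^6*(25*b1*e*d*v^4 + 50*b1*e^2*u*v^3 + 5*A1*d*v^4 + 20*A1*e*u*v^3)
        + x^4*y^7*(5*b1*d*v^5 + 25*b1*e*u*v^4 + 5*A1*u*v^4)
        + x^4*y^8*(5*b1*u*v^5)
        + x^5*y^1*(5*b1*e^4*v + 4*A1*e^3*v)
        + x^5*y^2*(10*b1*e^3*v^2 + 6*A1*e^2*v^2)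
        + x^5*y^3*(10*b1*e^2*v^3 + 4*A1*e*v^3)
        + x^5*y^4*(5*b1*e*v^4 + A1*v^4)
        + x^5*y^5*(b1*v^5))"
  unfolding assms xy4_coeff_fst_def by algebra

lemma prenormal_snd_expansion:
  fixes x y :: "'r::idom"
  assumes "P = x + d*y^2 + u*y^3" "Q = (1 + v*P)*y + e*P"
  shows "P^2*Q + (C0 + C1*Q)*Q^4 =
      ((x^2*y + K*y^4) + e*(x^3 + y^4) + (C0 - e - K)*y^4)
      + (x*(C0*e^4 + 5*y*C1*e^4 + 4*y*C0*e^3*v + x*C1*e^5) + y*(d^2 - 3*e*d*K + C1
          + 4*C0*e*d - 6*C0*e^2*K + 10*y*C1*e^3 + 12*y*C0*e^2*v + 4*y*C0*e^4*d))*(x^3 + y^4)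
      + (x*(v - d^2 + 3*e*d*K - C1 - 4*C0*e*d + 6*C0*e^2*K + 4*C0*e^3) + y*(3*e*d + 6*C0*e^2
          + 3*y*d*v + 3*y*e*u + 10*y*C1*e^2 + 12*y*C0*e*v + 12*y*C0*e^3*d))*(x^2*y + K*y^4)
      + (2*d + 4*C0*e)*(x*y^3)
      + xy4_coeff_snd C0 C1 e d u v K * (x*y^4)
      + (x^0*y^6*(- 3*d*v*K + 2*d*u - 3*e*u*K + e*d^3 + 5*C1*e*d - 10*C1*e^2*K - 10*C1*e^3
            + 4*C0*d*v - 12*C0*e*v*K + 4*C0*e*u - 12*C0*e^2*v
            + 6*C0*e^2*d^2 - 12*C0*e^3*d*K - 4*C0*e^4*d)
        + x^0*y^7*(u^2 + d^3*v + 3*e*d^2*u + 5*C1*d*v + 5*C1*e*u + 10*C1*e^2*d^2 + 4*C0*u*v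
            + 12*C0*e*d^2*v + 12*C0*e^2*d*u + 4*C0*e^3*d^3)
        + x^0*y^8*(3*d^2*u*v + 3*e*d*u^2 + 5*C1*u*v + 20*C1*e*d^2*v + 20*C1*e^2*d*u + 10*C1*e^3*d^3
            + 6*C0*d^2*v^2 + 24*C0*e*d*u*v + 6*C0*e^2*u^2 + 12*C0*e^2*d^3*v + 12*C0*e^3*d^2*u
            + C0*e^4*d^4)
        + x^0*y^9*(3*d*u^2*v + e*u^3 + 10*C1*d^2*v^2 + 40*C1*e*d*u*v + 10*C1*e^2*u^2
            + 30*C1*e^2*d^3*v + 30*C1*e^3*d^2*u + 5*C1*e^4*d^4 + 12*C0*d*u*v^2 + 12*C0*e*u^2*v
            + 12*C0*e*d^3*v^2 + 36*C0*e^2*d^2*u*v + 12*C0*e^3*d*u^2 + 4*C0*e^3*d^4*v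
            + 4*C0*e^4*d^3*u)
        + x^0*y^10*(u^3*v + 20*C1*d*u*v^2 + 20*C1*e*u^2*v + 30*C1*e*d^3*v^2 + 90*C1*e^2*d^2*u*v
            + 30*C1*e^3*d*u^2 + 20*C1*e^3*d^4*v + 20*C1*e^4*d^3*u + C1*e^5*d^5 + 6*C0*u^2*v^2
            + 4*C0*d^3*v^3 + 36*C0*e*d^2*u*v^2 + 36*C0*e^2*d*u^2*v + 6*C0*e^2*d^4*v^2 + 4*C0*e^3*u^3
            + 16*C0*e^3*d^3*u*v + 6*C0*e^4*d^2*u^2)
        + x^0*y^11*(10*C1*u^2*v^2 + 10*C1*d^3*v^3 + 90*C1*e*d^2*u*v^2 + 90*C1*e^2*d*u^2*v
            + 30*C1*e^2*d^4*v^2 + 10*C1*e^3*u^3 + 80*C1*e^3*d^3*u*v + 30*C1*e^4*d^2*u^2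
            + 5*C1*e^4*d^5*v + 5*C1*e^5*d^4*u + 12*C0*d^2*u*v^3 + 36*C0*e*d*u^2*v^2 + 4*C0*e*d^4*v^3
            + 12*C0*e^2*u^3*v + 24*C0*e^2*d^3*u*v^2 + 24*C0*e^3*d^2*u^2*v + 4*C0*e^4*d*u^3)
        + x^0*y^12*(30*C1*d^2*u*v^3 + 90*C1*e*d*u^2*v^2 + 20*C1*e*d^4*v^3 + 30*C1*e^2*u^3*v
            + 120*C1*e^2*d^3*u*v^2 + 120*C1*e^3*d^2*u^2*v + 10*C1*e^3*d^5*v^2 + 20*C1*e^4*d*u^3
            + 25*C1*e^4*d^4*u*v + 10*C1*e^5*d^3*u^2 + 12*C0*d*u^2*v^3 + C0*d^4*v^4 + 12*C0*e*u^3*v^2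
            + 16*C0*e*d^3*u*v^3 + 36*C0*e^2*d^2*u^2*v^2 + 16*C0*e^3*d*u^3*v + C0*e^4*u^4)
        + x^0*y^13*(30*C1*d*u^2*v^3 + 5*C1*d^4*v^4 + 30*C1*e*u^3*v^2 + 80*C1*e*d^3*u*v^3
            + 180*C1*e^2*d^2*u^2*v^2 + 10*C1*e^2*d^5*v^3 + 80*C1*e^3*d*u^3*v + 50*C1*e^3*d^4*u*v^2
            + 5*C1*e^4*u^4 + 50*C1*e^4*d^3*u^2*v + 10*C1*e^5*d^2*u^3 + 4*C0*u^3*v^3 + 4*C0*d^3*u*v^4
            + 24*C0*e*d^2*u^2*v^3 + 24*C0*e^2*d*u^3*v^2 + 4*C0*e^3*u^4*v)
        + x^0*y^14*(10*C1*u^3*v^3 + 20*C1*d^3*u*v^4 + 120*C1*e*d^2*u^2*v^3 + 5*C1*e*d^5*v^4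
            + 120*C1*e^2*d*u^3*v^2 + 50*C1*e^2*d^4*u*v^3 + 20*C1*e^3*u^4*v + 100*C1*e^3*d^3*u^2*v^2
            + 50*C1*e^4*d^2*u^3*v + 5*C1*e^5*d*u^4 + 6*C0*d^2*u^2*v^4 + 16*C0*e*d*u^3*v^3
            + 6*C0*e^2*u^4*v^2)
        + x^0*y^15*(30*C1*d^2*u^2*v^4 + C1*d^5*v^5 + 80*C1*e*d*u^3*v^3 + 25*C1*e*d^4*u*v^4
            + 30*C1*e^2*u^4*v^2 + 100*C1*e^2*d^3*u^2*v^3 + 100*C1*e^3*d^2*u^3*v^2
            + 25*C1*e^4*d*u^4*v + C1*e^5*u^5 + 4*C0*d*u^3*v^4 + 4*C0*e*u^4*v^3)
        + x^0*y^16*(20*C1*d*u^3*v^4 + 5*C1*d^4*u*v^5 + 20*C1*e*u^4*v^3 + 50*C1*e*d^3*u^2*v^4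
            + 100*C1*e^2*d^2*u^3*v^3 + 50*C1*e^3*d*u^4*v^2 + 5*C1*e^4*u^5*v + C0*u^4*v^4)
        + x^0*y^17*(5*C1*u^4*v^4 + 10*C1*d^3*u^2*v^5 + 50*C1*e*d^2*u^3*v^4 + 50*C1*e^2*d*u^4*v^3
            + 10*C1*e^3*u^5*v^2)
        + x^0*y^18*(10*C1*d^2*u^3*v^5 + 25*C1*e*d*u^4*v^4 + 10*C1*e^2*u^5*v^3)
        + x^0*y^19*(5*C1*d*u^4*v^5 + 5*C1*e*u^5*v^4)
        + x^0*y^20*(C1*u^5*v^5)
        + x^1*y^5*(3*d^2*v + 6*e*d*u + 5*C1*v + 20*C1*e^2*d - 5*C1*e^4 + 24*C0*e*d*v
            + 12*C0*e^2*u - 4*C0*e^3*v + 12*C0*e^3*d^2)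
        + x^1*y^6*(6*d*u*v + 3*e*u^2 + 40*C1*e*d*v + 20*C1*e^2*u + 30*C1*e^3*d^2 + 12*C0*d*v^2
            + 24*C0*e*u*v + 36*C0*e^2*d^2*v + 24*C0*e^3*d*u + 4*C0*e^4*d^3)
        + x^1*y^7*(3*u^2*v + 20*C1*d*v^2 + 40*C1*e*u*v + 90*C1*e^2*d^2*v + 60*C1*e^3*d*u
            + 20*C1*e^4*d^3 + 12*C0*u*v^2 + 36*C0*e*d^2*v^2 + 72*C0*e^2*d*u*v + 12*C0*e^3*u^2
            + 16*C0*e^3*d^3*v + 12*C0*e^4*d^2*u)
        + x^1*y^8*(20*C1*u*v^2 + 90*C1*e*d^2*v^2 + 180*C1*e^2*d*u*v + 30*C1*e^3*u^2
            + 80*C1*e^3*d^3*v + 60*C1*e^4*d^2*u + 5*C1*e^5*d^4 + 12*C0*d^2*v^3 + 72*C0*e*d*u*v^2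
            + 36*C0*e^2*u^2*v + 24*C0*e^2*d^3*v^2 + 48*C0*e^3*d^2*u*v + 12*C0*e^4*d*u^2)
        + x^1*y^9*(30*C1*d^2*v^3 + 180*C1*e*d*u*v^2 + 90*C1*e^2*u^2*v + 120*C1*e^2*d^3*v^2
            + 240*C1*e^3*d^2*u*v + 60*C1*e^4*d*u^2 + 25*C1*e^4*d^4*v + 20*C1*e^5*d^3*u
            + 24*C0*d*u*v^3 + 36*C0*e*u^2*v^2 + 16*C0*e*d^3*v^3 + 72*C0*e^2*d^2*u*v^2
            + 48*C0*e^3*d*u^2*v + 4*C0*e^4*u^3)
        + x^1*y^10*(60*C1*d*u*v^3 + 90*C1*e*u^2*v^2 + 80*C1*e*d^3*v^3 + 360*C1*e^2*d^2*u*v^2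
            + 240*C1*e^3*d*u^2*v + 50*C1*e^3*d^4*v^2 + 20*C1*e^4*u^3 + 100*C1*e^4*d^3*u*v
            + 30*C1*e^5*d^2*u^2 + 12*C0*u^2*v^3 + 4*C0*d^3*v^4 + 48*C0*e*d^2*u*v^3
            + 72*C0*e^2*d*u^2*v^2 + 16*C0*e^3*u^3*v)
        + x^1*y^11*(30*C1*u^2*v^3 + 20*C1*d^3*v^4 + 240*C1*e*d^2*u*v^3 + 360*C1*e^2*d*u^2*v^2
            + 50*C1*e^2*d^4*v^3 + 80*C1*e^3*u^3*v + 200*C1*e^3*d^3*u*v^2 + 150*C1*e^4*d^2*u^2*v
            + 20*C1*e^5*d*u^3 + 12*C0*d^2*u*v^4 + 48*C0*e*d*u^2*v^3 + 24*C0*e^2*u^3*v^2)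
        + x^1*y^12*(60*C1*d^2*u*v^4 + 240*C1*e*d*u^2*v^3 + 25*C1*e*d^4*v^4 + 120*C1*e^2*u^3*v^2
            + 200*C1*e^2*d^3*u*v^3 + 300*C1*e^3*d^2*u^2*v^2 + 100*C1*e^4*d*u^3*v + 5*C1*e^5*u^4
            + 12*C0*d*u^2*v^4 + 16*C0*e*u^3*v^3)
        + x^1*y^13*(60*C1*d*u^2*v^4 + 5*C1*d^4*v^5 + 80*C1*e*u^3*v^3 + 100*C1*e*d^3*u*v^4
            + 300*C1*e^2*d^2*u^2*v^3 + 200*C1*e^3*d*u^3*v^2 + 25*C1*e^4*u^4*v + 4*C0*u^3*v^4)
        + x^1*y^14*(20*C1*u^3*v^4 + 20*C1*d^3*u*v^5 + 150*C1*e*d^2*u^2*v^4 + 200*C1*e^2*d*u^3*v^3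
            + 50*C1*e^3*u^4*v^2)
        + x^1*y^15*(30*C1*d^2*u^2*v^5 + 100*C1*e*d*u^3*v^4 + 50*C1*e^2*u^4*v^3)
        + x^1*y^16*(20*C1*d*u^3*v^5 + 25*C1*e*u^4*v^4)
        + x^1*y^17*(5*C1*u^4*v^5)
        + x^2*y^4*(3*u*v + 20*C1*e*v + 30*C1*e^3*d - C1*e^5 + 6*C0*v^2 + 36*C0*e^2*d*v + 12*C0*e^3*u
            + 6*C0*e^4*d^2)
        + x^2*y^5*(10*C1*v^2 + 90*C1*e^2*d*v + 30*C1*e^3*u + 30*C1*e^4*d^2 + 36*C0*e*d*v^2
            + 36*C0*e^2*u*v + 24*C0*e^3*d^2*v + 12*C0*e^4*d*u)
        + x^2*y^6*(90*C1*e*d*v^2 + 90*C1*e^2*u*v + 120*C1*e^3*d^2*v + 60*C1*e^4*d*u + 10*C1*e^5*d^3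
            + 12*C0*d*v^3 + 36*C0*e*u*v^2 + 36*C0*e^2*d^2*v^2 + 48*C0*e^3*d*u*v + 6*C0*e^4*u^2)
        + x^2*y^7*(30*C1*d*v^3 + 90*C1*e*u*v^2 + 180*C1*e^2*d^2*v^2 + 240*C1*e^3*d*u*v
            + 30*C1*e^4*u^2 + 50*C1*e^4*d^3*v + 30*C1*e^5*d^2*u + 12*C0*u*v^3 + 24*C0*e*d^2*v^3
            + 72*C0*e^2*d*u*v^2 + 24*C0*e^3*u^2*v)
        + x^2*y^8*(30*C1*u*v^3 + 120*C1*e*d^2*v^3 + 360*C1*e^2*d*u*v^2 + 120*C1*e^3*u^2*v
            + 100*C1*e^3*d^3*v^2 + 150*C1*e^4*d^2*u*v + 30*C1*e^5*d*u^2 + 6*C0*d^2*v^4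
            + 48*C0*e*d*u*v^3 + 36*C0*e^2*u^2*v^2)
        + x^2*y^9*(30*C1*d^2*v^4 + 240*C1*e*d*u*v^3 + 180*C1*e^2*u^2*v^2 + 100*C1*e^2*d^3*v^3
            + 300*C1*e^3*d^2*u*v^2 + 150*C1*e^4*d*u^2*v + 10*C1*e^5*u^3 + 12*C0*d*u*v^4
            + 24*C0*e*u^2*v^3)
        + x^2*y^10*(60*C1*d*u*v^4 + 120*C1*e*u^2*v^3 + 50*C1*e*d^3*v^4 + 300*C1*e^2*d^2*u*v^3
            + 300*C1*e^3*d*u^2*v^2 + 50*C1*e^4*u^3*v + 6*C0*u^2*v^4)
        + x^2*y^11*(30*C1*u^2*v^4 + 10*C1*d^3*v^5 + 150*C1*e*d^2*u*v^4 + 300*C1*e^2*d*u^2*v^3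
            + 100*C1*e^3*u^3*v^2)
        + x^2*y^12*(30*C1*d^2*u*v^5 + 150*C1*e*d*u^2*v^4 + 100*C1*e^2*u^3*v^3)
        + x^2*y^13*(30*C1*d*u^2*v^5 + 50*C1*e*u^3*v^4)
        + x^2*y^14*(10*C1*u^3*v^5)
        + x^3*y^3*(30*C1*e^2*v + 20*C1*e^4*d + 12*C0*e*v^2 + 16*C0*e^3*d*v + 4*C0*e^4*u)
        + x^3*y^4*(30*C1*e*v^2 + 80*C1*e^3*d*v + 20*C1*e^4*u + 10*C1*e^5*d^2 + 4*C0*v^3
            + 24*C0*e^2*d*v^2 + 16*C0*e^3*u*v)
        + x^3*y^5*(10*C1*v^3 + 120*C1*e^2*d*v^2 + 80*C1*e^3*u*v + 50*C1*e^4*d^2*v + 20*C1*e^5*d*u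
            + 16*C0*e*d*v^3 + 24*C0*e^2*u*v^2)
        + x^3*y^6*(80*C1*e*d*v^3 + 120*C1*e^2*u*v^2 + 100*C1*e^3*d^2*v^2 + 100*C1*e^4*d*u*v
            + 10*C1*e^5*u^2 + 4*C0*d*v^4 + 16*C0*e*u*v^3)
        + x^3*y^7*(20*C1*d*v^4 + 80*C1*e*u*v^3 + 100*C1*e^2*d^2*v^3 + 200*C1*e^3*d*u*v^2
            + 50*C1*e^4*u^2*v + 4*C0*u*v^4)
        + x^3*y^8*(20*C1*u*v^4 + 50*C1*e*d^2*v^4 + 200*C1*e^2*d*u*v^3 + 100*C1*e^3*u^2*v^2)
        + x^3*y^9*(10*C1*d^2*v^5 + 100*C1*e*d*u*v^4 + 100*C1*e^2*u^2*v^3)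
        + x^3*y^10*(20*C1*d*u*v^5 + 50*C1*e*u^2*v^4)
        + x^3*y^11*(10*C1*u^2*v^5)
        + x^4*y^2*(20*C1*e^3*v + 5*C1*e^5*d + 6*C0*e^2*v^2)
        + x^4*y^3*(30*C1*e^2*v^2 + 25*C1*e^4*d*v + 5*C1*e^5*u + 4*C0*e*v^3)
        + x^4*y^4*(20*C1*e*v^3 + 50*C1*e^3*d*v^2 + 25*C1*e^4*u*v + C0*v^4)
        + x^4*y^5*(5*C1*v^4 + 50*C1*e^2*d*v^3 + 50*C1*e^3*u*v^2)
        + x^4*y^6*(25*C1*e*d*v^4 + 50*C1*e^2*u*v^3)
        + x^4*y^7*(5*C1*d*v^5 + 25*C1*e*u*v^4)
        + x^4*y^8*(5*C1*u*v^5)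
        + x^5*y^1*(5*C1*e^4*v)
        + x^5*y^2*(10*C1*e^3*v^2)
        + x^5*y^3*(10*C1*e^2*v^3)
        + x^5*y^4*(5*C1*e*v^4)
        + x^5*y^5*(C1*v^5))"
  unfolding assms xy4_coeff_snd_def by algebra

lemma xy4_coeff_fst_cst:
  "xy4_coeff_fst (cst A0) (cst A1) (cst b1) (cst e) (cst d) (cst v) (cst K) =
    (cst (xy4_coeff_fst A0 A1 b1 e d v K) :: 'a::comm_ring_1 bips)"
  and xy4_coeff_snd_cst:
  "xy4_coeff_snd (cst C0) (cst C1) (cst e) (cst d) (cst u) (cst v) (cst K) =
    (cst (xy4_coeff_snd C0 C1 e d u v K) :: 'a::comm_ring_1 bips)"
  by (simp_all add: xy4_coeff_fst_def xy4_coeff_snd_def cst_simps)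

text \<open>A triangular system, linear in e, v, K, d, u in turn with leading coefficients 4, 4, -1, 2, 2:
  this is where the characteristic enters.\<close>

lemma normal_form_parameters:
  fixes a0 a1 b1 c0 c1 :: "'a::field"
  assumes "(2::'a) \<noteq> 0"
  obtains e d v u K where "4 * e + a0 = 0" "xy4_coeff_fst a0 a1 b1 e d v K = 0" "c0 - e - K = 0"
    "2 * d + 4 * c0 * e = 0" "xy4_coeff_snd c0 c1 e d u v K = 0"
proof
  have four: "(4::'a) \<noteq> 0"
    using assms by (metis mult_2 mult_eq_0_iff numeral_Bit0)
  define e where "e = - a0 / 4"
  define K where "K = c0 - e"
  define d where "d = - 2 * c0 * e"
  define v where "v = - xy4_coeff_fst a0 a1 b1 e d 0 K / 4"
  define u where "u = - xy4_coeff_snd c0 c1 e d 0 v K / 2"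
  have fst: "xy4_coeff_fst a0 a1 b1 e d v' K = 4 * v' + xy4_coeff_fst a0 a1 b1 e d 0 K" for v'
    by (simp add: xy4_coeff_fst_def)
  have snd: "xy4_coeff_snd c0 c1 e d u' v K = 2 * u' + xy4_coeff_snd c0 c1 e d 0 v K" for u'
    by (simp add: xy4_coeff_snd_def)
  show "4 * e + a0 = 0" using four by (simp add: e_def)
  show "xy4_coeff_fst a0 a1 b1 e d v K = 0" using four fst[of v] by (simp add: v_def)
  show "c0 - e - K = 0" by (simp add: K_def)
  show "2 * d + 4 * c0 * e = 0" by (simp add: d_def)
  show "xy4_coeff_snd c0 c1 e d u v K = 0" using assms snd[of u] by (simp add: u_def)
qed

lemma of_y_jet_2:
  "of_y a = (cst (a$0) + cst (a$1) * vy + vy^2 * of_y (fps_shift 2 a) :: 'a::comm_ring_1 bips)"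
proof -
  have "a = fps_const (a$0) + fps_const (a$1) * fps_X + fps_X^2 * fps_shift 2 a"
    using fps_shift_cutoff'[of 2 a] by (simp add: fps_cutoff_eq_sum numeral_2_eq_2 add.commute)
  then show ?thesis
    by (metis of_y_add of_y_mult of_y_const of_y_X_power power_one_right)
qed

lemma in_max_pow_2_alg_endo_of_y:
  assumes "alg_endo \<phi>" "in_max (\<phi> vy)"
  shows "in_max_pow 2 (\<phi> (of_y a) - (cst (a$0) + cst (a$1) * \<phi> vy))"
proof -
  have "\<phi> (of_y a) - (cst (a$0) + cst (a$1) * \<phi> vy) = \<phi> vy ^ 2 * \<phi> (of_y (fps_shift 2 a))"
    by (subst of_y_jet_2) (simp add: alg_endo_simps[OF assms(1)])
  then show ?thesis
    using in_max_pow_power[of 1 "\<phi> vy" 2] assms(2)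
    by (simp add: in_max_iff_in_max_pow_1 in_max_pow_mult_right)
qed

lemma in_max_pow_6_alg_endo_prenormal:
  assumes "alg_endo \<phi>" "\<phi> vx = P" "\<phi> vy = Q" "in_max P" "in_max Q"
  shows "in_max_pow 6 (\<phi> (fst (prenormal A b C)) -
      (P^3 + (cst (A$0) + cst (A$1) * Q) * P * Q^3 + (cst (b$0) + cst (b$1) * Q) * Q^4))"
    and "in_max_pow 6 (\<phi> (snd (prenormal A b C)) - (P^2 * Q + (cst (C$0) + cst (C$1) * Q) * Q^4))"
proof -
  have jet: "in_max_pow 2 (\<phi> (of_y a) - (cst (a$0) + cst (a$1) * Q))" for a
    using in_max_pow_2_alg_endo_of_y[OF assms(1)] assms(3,5) by simp
  have P: "in_max_pow 1 P" and Q: "in_max_pow 1 Q"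
    using assms(4,5) by (simp_all add: in_max_iff_in_max_pow_1)
  have Q3: "in_max_pow 3 (Q^3)" and Q4: "in_max_pow 4 (Q^4)"
    using in_max_pow_power[OF Q, of 3] in_max_pow_power[OF Q, of 4] by simp_all
  have "\<phi> (fst (prenormal A b C)) -
        (P^3 + (cst (A$0) + cst (A$1) * Q) * P * Q^3 + (cst (b$0) + cst (b$1) * Q) * Q^4) =
      (\<phi> (of_y A) - (cst (A$0) + cst (A$1) * Q)) * P * Q^3 +
        (\<phi> (of_y b) - (cst (b$0) + cst (b$1) * Q)) * Q^4"
    by (simp add: prenormal_def alg_endo_simps[OF assms(1)] assms(2,3) algebra_simps)
  moreover have "in_max_pow 6 ((\<phi> (of_y A) - (cst (A$0) + cst (A$1) * Q)) * P * Q^3)"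
    using in_max_pow_mult[OF in_max_pow_mult[OF jet P] Q3] by simp
  moreover have "in_max_pow 6 ((\<phi> (of_y b) - (cst (b$0) + cst (b$1) * Q)) * Q^4)"
    using in_max_pow_mult[OF jet Q4] by simp
  ultimately show "in_max_pow 6 (\<phi> (fst (prenormal A b C)) -
      (P^3 + (cst (A$0) + cst (A$1) * Q) * P * Q^3 + (cst (b$0) + cst (b$1) * Q) * Q^4))"
    by (simp add: in_max_pow_add)
  have "\<phi> (snd (prenormal A b C)) - (P^2 * Q + (cst (C$0) + cst (C$1) * Q) * Q^4)
      = (\<phi> (of_y C) - (cst (C$0) + cst (C$1) * Q)) * Q^4"
    by (simp add: prenormal_def alg_endo_simps[OF assms(1)] assms(2,3) algebra_simps)
  then show "in_max_pow 6 (\<phi> (snd (prenormal A b C)) - (P^2 * Q + (cst (C$0) + cst (C$1) * Q) * Q^4))"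
    using in_max_pow_mult[OF jet Q4] by (simp add: in_max_pow_mono)
qed

lemma truncated_prenormal_in_max_ideal:
  fixes a0 a1 b1 c0 c1 e d u v K :: "'a::field"
  assumes "4 * e + a0 = 0" "xy4_coeff_fst a0 a1 b1 e d v K = 0" "c0 - e - K = 0"
    "2 * d + 4 * c0 * e = 0" "xy4_coeff_snd c0 c1 e d u v K = 0"
    and P: "P = vx + cst d * vy^2 + cst u * vy^3" and Q: "Q = (1 + cst v * P) * vy + cst e * P"
  shows "in_max_ideal nf1 (nf2 K) (P^3 + (cst a0 + cst a1 * Q) * P * Q^3 + (1 + cst b1 * Q) * Q^4 - nf1)"
    and "in_max_ideal nf1 (nf2 K) (P^2 * Q + (cst c0 + cst c1 * Q) * Q^4 - (nf2 K + cst e * nf1))"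
proof -
  have coeffs: "4 * cst e + cst a0 = (0 :: 'a bips)" "cst c0 - cst e - cst K = (0 :: 'a bips)"
    "2 * cst d + 4 * cst c0 * cst e = (0 :: 'a bips)"
    "xy4_coeff_fst (cst a0) (cst a1) (cst b1) (cst e) (cst d) (cst v) (cst K) = (0 :: 'a bips)"
    "xy4_coeff_snd (cst c0) (cst c1) (cst e) (cst d) (cst u) (cst v) (cst K) = (0 :: 'a bips)"
    using assms(1-5)[THEN arg_cong[of _ _ cst]]
    by (simp_all add: cst_simps xy4_coeff_fst_cst xy4_coeff_snd_cst)
  show "in_max_ideal nf1 (nf2 K) (P^3 + (cst a0 + cst a1 * Q) * P * Q^3 + (1 + cst b1 * Q) * Q^4 - nf1)"
    by (rule in_max_ideal_of_expansion[OF prenormal_fst_expansion[OF P Q] coeffs(1,4)])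
       (intro in_max_pow_add in_max_pow_monomial; simp)
  have "in_max_ideal nf1 (nf2 K)
      (P^2 * Q + (cst c0 + cst c1 * Q) * Q^4 - (nf2 K + cst e * nf1 + (cst c0 - cst e - cst K) * vy^4))"
    by (rule in_max_ideal_of_expansion[OF prenormal_snd_expansion[OF P Q] coeffs(3,5)])
       (intro in_max_pow_add in_max_pow_monomial; simp)
  then show "in_max_ideal nf1 (nf2 K) (P^2 * Q + (cst c0 + cst c1 * Q) * Q^4 - (nf2 K + cst e * nf1))"
    by (simp add: coeffs)
qed

lemma contact_equiv_prenormal_nf:
  fixes A b C :: "'a::field fps"
  assumes "b $ 0 = 1" and "(2::'a) \<noteq> 0"
  shows "\<exists>K. contact_equiv (prenormal A b C) (nf1, nf2 K)"
proof -
  obtain e d v u K :: 'a where par: "4 * e + A$0 = 0" "xy4_coeff_fst (A$0) (A$1) (b$1) e d v K = 0"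
    "C$0 - e - K = 0" "2 * d + 4 * C$0 * e = 0" "xy4_coeff_snd (C$0) (C$1) e d u v K = 0"
    using normal_form_parameters[OF assms(2)] by metis
  define P where "P = vx + cst d * vy^2 + cst u * vy^3"
  define Q where "Q = (1 + cst v * P) * vy + cst e * P"
  define \<psi> where "\<psi> = subst_xy P Q"
  have PQ: "in_max P" "in_max Q"
    by (simp_all add: P_def Q_def in_max_def bips_mult_nth_0_0 bips_power_nth_0_0 cst_nth vx_nth vy_nth)
  have "P = vx + of_y (fps_const d * fps_X^2 + fps_const u * fps_X^3)"
    by (simp add: P_def of_y_add of_y_mult of_y_const of_y_X_power)
  then have aut: "is_aut \<psi>"
    unfolding \<psi>_def Q_def by (rule is_aut_coordinate_change[rotated]) simp
  have \<psi>: "alg_endo \<psi>" "\<psi> vx = P" "\<psi> vy = Q"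
    using is_aut_alg_endo[OF aut] PQ by (simp_all add: \<psi>_def subst_xy_vx subst_xy_vy)
  define g1 g2 where "g1 = \<psi> (fst (prenormal A b C))" and "g2 = \<psi> (snd (prenormal A b C))"
  define T1 where "T1 = P^3 + (cst (A$0) + cst (A$1) * Q) * P * Q^3 + (1 + cst (b$1) * Q) * Q^4"
  define T2 where "T2 = P^2 * Q + (cst (C$0) + cst (C$1) * Q) * Q^4"
  have "in_max_ideal nf1 (nf2 K) (g1 - T1)" "in_max_ideal nf1 (nf2 K) (g2 - T2)"
    using in_max_pow_6_alg_endo_prenormal[OF \<psi> PQ, of A b C] assms(1)
    by (simp_all add: g1_def g2_def T1_def T2_def cst_1 in_max_pow_6_in_max_ideal)
  moreover have "in_max_ideal nf1 (nf2 K) (T1 - nf1)" "in_max_ideal nf1 (nf2 K) (T2 - (nf2 K + cst e * nf1))"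
    using truncated_prenormal_in_max_ideal[OF par P_def Q_def] by (simp_all add: T1_def T2_def)
  moreover have "g1 - nf1 = (g1 - T1) + (T1 - nf1)"
    "g2 - (nf2 K + cst e * nf1) = (g2 - T2) + (T2 - (nf2 K + cst e * nf1))"
    by simp_all
  ultimately have "in_max_ideal nf1 (nf2 K) (g1 - nf1)" "in_max_ideal nf1 (nf2 K) (g2 - (nf2 K + cst e * nf1))"
    by (metis in_max_ideal_add)+
  then have "contact_equiv (g1, g2) (nf1, nf2 K)"
    by (rule contact_equiv_if_in_max_ideal_row_op)
  moreover have "contact_equiv (prenormal A b C) (g1, g2)"
    using contact_equiv_intro[OF aut, of 1 1 0 0 1 "prenormal A b C"] by (simp add: g1_def g2_def)
  ultimately show ?thesis
    using contact_equiv_trans by blast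
qed

lemma contact_equiv_prenormal_normalize_b0:
  fixes A b C :: "'a::alg_closed_field fps"
  assumes "b $ 0 \<noteq> 0"
  obtains A' b' C' where "b' $ 0 = 1" "contact_equiv (prenormal A b C) (prenormal A' b' C')"
proof -
  obtain \<alpha> :: 'a where \<alpha>: "\<alpha> ^ 3 = b $ 0"
    using nth_root_exists[of 3 "b $ 0"] by auto
  then have "\<alpha> \<noteq> 0" using assms by auto
  define \<phi> where "\<phi> = subst_xy (cst \<alpha> * vx) vy"
  have m: "in_max (cst \<alpha> * vx)" "in_max vy"
    by (simp_all add: in_max_mult_left in_max_def vx_nth vy_nth)
  have \<phi>: "alg_endo \<phi>" "\<phi> vx = cst \<alpha> * vx" "\<phi> vy = vy" "\<phi> (of_y a) = of_y a" for a
    unfolding \<phi>_def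
    using alg_endo_subst_xy[OF m] subst_xy_vx[OF m] subst_xy_vy[OF m] subst_xy_of_y_vy[OF m(1)] by simp_all
  define A' b' C' where "A' = A * fps_const (\<alpha> / b $ 0)" and "b' = b * fps_const (inverse (b $ 0))"
    and "C' = C * fps_const (inverse (\<alpha>^2))"
  have k: "cst (inverse (b $ 0)) * cst \<alpha> ^ 3 = (1 :: 'a bips)"
    "cst (inverse (b $ 0)) * cst \<alpha> = (cst (\<alpha> / b $ 0) :: 'a bips)"
    "cst (inverse (\<alpha>^2)) * cst \<alpha> ^ 2 = (1 :: 'a bips)"
    using \<alpha> assms \<open>\<alpha> \<noteq> 0\<close> by (simp_all flip: cst_mult cst_power add: cst_1 field_simps)
  have "cst (inverse (b $ 0)) * \<phi> (fst (prenormal A b C)) =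
      cst (inverse (b $ 0)) * ((cst \<alpha> * vx)^3 + of_y A * (cst \<alpha> * vx) * vy^3 + of_y b * vy^4)"
    by (simp add: prenormal_def alg_endo_simps[OF \<phi>(1)] \<phi>(2-4))
  also have "\<dots> = fst (prenormal A' b' C')"
    unfolding prenormal_def fst_conv A'_def b'_def of_y_mult of_y_const using k by algebra
  moreover have "cst (inverse (\<alpha>^2)) * \<phi> (snd (prenormal A b C)) =
      cst (inverse (\<alpha>^2)) * ((cst \<alpha> * vx)^2 * vy + of_y C * vy^4)"
    by (simp add: prenormal_def alg_endo_simps[OF \<phi>(1)] \<phi>(2-4))
  moreover have "\<dots> = snd (prenormal A' b' C')"
    unfolding prenormal_def snd_conv C'_def of_y_mult of_y_const using k by algebra
  ultimately have "contact_equiv (prenormal A b C) (prenormal A' b' C')"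
    using contact_equiv_scale[of \<alpha> 1 "inverse (b $ 0)" "inverse (\<alpha>^2)" "fst (prenormal A b C)"
        "snd (prenormal A b C)"] \<open>\<alpha> \<noteq> 0\<close> assms
    by (simp add: \<phi>_def cst_1)
  moreover have "b' $ 0 = 1"
    using assms by (simp add: b'_def)
  ultimately show ?thesis
    using that by blast
qed

lemma contact_equiv_nf_0_or_1:
  fixes K :: "'a::field"
  shows "\<exists>lam\<in>{0, 1}. contact_equiv (nf1, nf2 K) (nf1, nf2 lam)"
proof (cases "K = 0")
  case True
  then show ?thesis using contact_equiv_refl by blast
next
  case False
  define \<phi> where "\<phi> = subst_xy (cst (inverse (K^4)) * vx) (cst (inverse (K^3)) * vy)"
  have \<phi>: "alg_endo \<phi>" "\<phi> vx = cst (inverse (K^4)) * vx" "\<phi> vy = cst (inverse (K^3)) * vy"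
    unfolding \<phi>_def subst_xy_scale_vx_vy
    by (simp_all add: alg_endo_subst_xy in_max_mult_left in_max_def vx_nth vy_nth)
  have "K * K^11 = K^12"
    by (simp add: power_Suc[symmetric])
  then have k: "cst (K^12) * cst (inverse (K^4)) ^ 3 = (1 :: 'a bips)"
    "cst (K^12) * cst (inverse (K^3)) ^ 4 = (1 :: 'a bips)"
    "cst (K^11) * cst (inverse (K^4)) ^ 2 * cst (inverse (K^3)) = (1 :: 'a bips)"
    "cst (K^11) * cst K * cst (inverse (K^3)) ^ 4 = (1 :: 'a bips)"
    using False by (simp_all flip: cst_mult cst_power add: cst_1 field_simps)
  have "cst (K^12) * \<phi> nf1 = cst (K^12) * ((cst (inverse (K^4)) * vx) ^ 3 + (cst (inverse (K^3)) * vy) ^ 4)"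
    by (simp add: alg_endo_simps[OF \<phi>(1)] \<phi>(2,3))
  also have "\<dots> = nf1"
    using k by algebra
  moreover have "cst (K^11) * \<phi> (nf2 K) = cst (K^11) *
      ((cst (inverse (K^4)) * vx) ^ 2 * (cst (inverse (K^3)) * vy) + cst K * (cst (inverse (K^3)) * vy) ^ 4)"
    by (simp add: alg_endo_simps[OF \<phi>(1)] \<phi>(2,3))
  moreover have "\<dots> = nf2 1"
    using k by (simp add: cst_1) algebra
  ultimately have "contact_equiv (nf1, nf2 K) (nf1, nf2 1)"
    using contact_equiv_scale[of "inverse (K^4)" "inverse (K^3)" "K^12" "K^11" nf1 "nf2 K"] False
    by (simp add: \<phi>_def)
  then show ?thesis by blast
qed

lemma prenormal_vy_powers:
  assumes "3 \<le> r" "4 \<le> t"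
  shows "prenormal (a * fps_X ^ (r - 3)) b (c * fps_X ^ (t - 4)) =
    (vx^3 + of_y a * vx * vy^r + of_y b * vy^4, vx^2 * vy + of_y c * vy^t)"
proof -
  have "vy ^ r = vy ^ 3 * (vy ^ (r - 3) :: 'a::comm_ring_1 bips)" "vy ^ t = vy ^ 4 * (vy ^ (t - 4) :: 'a bips)"
    using assms by (simp_all flip: power_add)
  then show ?thesis
    by (simp add: prenormal_def of_y_mult of_y_X_power mult_ac)
qed

lemma two_neq_zero_if_char:
  assumes "CHAR('a::field) = 0 \<or> CHAR('a) > 3"
  shows "(2::'a) \<noteq> 0"
proof
  assume "(2::'a) = 0"
  then have "of_nat 2 = (0::'a)" by simp
  then have "CHAR('a) dvd 2" by (simp only: of_nat_eq_0_iff_char_dvd)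
  then show False using assms by (auto dest: dvd_imp_le)
qed

theorem proposition5p12:
  fixes f :: "'a::alg_closed_field bips \<times> 'a bips"
    and a b c :: "'a fps" and r s t :: nat
  assumes "CHAR('a) = 0 \<or> CHAR('a) > 3"
    and "ICIS f"
    and "r \<ge> 3" and "s \<ge> 4" and "t \<ge> 4"
    and "a $ 0 \<noteq> 0" and "b $ 0 \<noteq> 0" and "c $ 0 \<noteq> 0"
    and "contact_equiv f
           (vx ^ 3 + of_y a * vx * vy ^ r + of_y b * vy ^ s,
            vx ^ 2 * vy + of_y c * vy ^ t)"
    and "s = 4"
  shows "\<exists>lam\<in>{0, 1}. contact_equiv f (vx ^ 3 + vy ^ 4, vx ^ 2 * vy + cst lam * vy ^ 4)"
proof -
  have "contact_equiv f (prenormal (a * fps_X ^ (r - 3)) b (c * fps_X ^ (t - 4)))"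
    using assms(9) unfolding assms(10) prenormal_vy_powers[OF assms(3,5)] .
  moreover obtain A' b' C' where "b' $ 0 = 1"
    "contact_equiv (prenormal (a * fps_X ^ (r - 3)) b (c * fps_X ^ (t - 4))) (prenormal A' b' C')"
    using contact_equiv_prenormal_normalize_b0[OF assms(7)] by metis
  moreover obtain K where "contact_equiv (prenormal A' b' C') (nf1, nf2 K)"
    using contact_equiv_prenormal_nf[OF \<open>b' $ 0 = 1\<close> two_neq_zero_if_char[OF assms(1)]] by blast
  moreover obtain lam where "lam \<in> {0, 1}" "contact_equiv (nf1, nf2 K) (nf1, nf2 lam)"
    using contact_equiv_nf_0_or_1 by blast
  ultimately show ?thesis
    using contact_equiv_trans by blast
qed

end
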